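(* Let $k$ be a field, $\Gamma=(V,E)$ a finite connected quiver, and $I\subseteq R^2$ a two-sided ideal of $k\Gamma$ such that $k\Gamma/I$ is acyclic. Then $\dim_k H^1(k\Gamma,k\Gamma/I)=|\mathfrak{B}_2|+1-|V|$.
   Context: For a path $p$, $t(p),h(p)$ are its start and end vertex; paths multiply by left-to-right concatenation (product $0$ if they do not concatenate). $R$ is the ideal generated by $E$, $\overline{x}=x+I$. A differential operator from $k\Gamma$ to $k\Gamma/I$ is a $k$-linear map with $D(xy)=D(x)\overline{y}+\overline{x}D(y)$; $H^1(k\Gamma,k\Gamma/I)$ is the space of differential operators modulo the inner ones $x\mapsto m\overline{x}-\overline{x}m$ ($m\in k\Gamma/I$). $\mathscr{Q}$ is a fixed $k$-basis of $k\Gamma/I$ consisting of residue classes of paths and containing the classes of all vertices and arrows; $t(\overline{s}),h(\overline{s})$ for $\overline{s}\in\mathscr{Q}$ are the start/end vertex of any representing path (well defined). $k\Gamma/I$ is called acyclic if every $\overline{q}\in\mathscr{Q}$ with $t(\overline{q})=h(\overline{q})$ is the class of a vertex (this does not depend on the choice of $\mathscr{Q}$). $\mathfrak{B}_2=\{D_{r,\overline{s}}\mid r\in E,\ \overline{s}\in\mathscr{Q},\ t(r)=t(\overline{s}),\ h(r)=h(\overline{s})\}$, where $D_{r,\overline{s}}$ is the unique differential operator $k\Gamma\to k\Gamma/I$ with $D_{r,\overline{s}}(r)=\overline{s}$ and vanishing on all other arrows and vertices. *)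

theory Defs
  imports Main
begin

text \<open>A quiver is given by a vertex set V, an arrow set E and maps
  src (= t, start vertex) and tgt (= h, end vertex).  A path is a pair
  (v, as) of its start vertex v and its list of arrows (read left to right);
  (v, []) is the trivial path at v.\<close>

type_synonym ('v,'e) qpath = "'v \<times> 'e list"

fun pvalid_aux :: "'v set \<Rightarrow> 'e set \<Rightarrow> ('e \<Rightarrow> 'v) \<Rightarrow> ('e \<Rightarrow> 'v) \<Rightarrow> 'v \<Rightarrow> 'e list \<Rightarrow> bool" where
  "pvalid_aux V E src tgt v [] = (v \<in> V)"
| "pvalid_aux V E src tgt v (a # as) =
     (v \<in> V \<and> a \<in> E \<and> src a = v \<and> pvalid_aux V E src tgt (tgt a) as)"

definition pvalid :: "'v set \<Rightarrow> 'e set \<Rightarrow> ('e \<Rightarrow> 'v) \<Rightarrow> ('e \<Rightarrow> 'v) \<Rightarrow> ('v,'e) qpath \<Rightarrow> bool" where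
  "pvalid V E src tgt p = pvalid_aux V E src tgt (fst p) (snd p)"

fun pend_aux :: "('e \<Rightarrow> 'v) \<Rightarrow> 'v \<Rightarrow> 'e list \<Rightarrow> 'v" where
  "pend_aux tgt v [] = v"
| "pend_aux tgt v (a # as) = pend_aux tgt (tgt a) as"

definition pstart :: "('v,'e) qpath \<Rightarrow> 'v" where "pstart p = fst p"

definition pend :: "('e \<Rightarrow> 'v) \<Rightarrow> ('v,'e) qpath \<Rightarrow> 'v" where
  "pend tgt p = pend_aux tgt (fst p) (snd p)"

definition pathalg :: "'v set \<Rightarrow> 'e set \<Rightarrow> ('e \<Rightarrow> 'v) \<Rightarrow> ('e \<Rightarrow> 'v) \<Rightarrow> (('v,'e) qpath \<Rightarrow> 'k::field) set" where
  "pathalg V E src tgt = {x. finite {p. x p \<noteq> 0} \<and> (\<forall>p. x p \<noteq> 0 \<longrightarrow> pvalid V E src tgt p)}"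

text \<open>Multiplication: bilinear extension of left-to-right concatenation of paths
  (product 0 if paths do not concatenate).\<close>

definition pmult :: "('e \<Rightarrow> 'v) \<Rightarrow> (('v,'e) qpath \<Rightarrow> 'k::field) \<Rightarrow> (('v,'e) qpath \<Rightarrow> 'k) \<Rightarrow> (('v,'e) qpath \<Rightarrow> 'k)" where
  "pmult tgt x y = (\<lambda>(v, zs). \<Sum>i\<in>{0..length zs}.
      x (v, take i zs) * y (pend_aux tgt v (take i zs), drop i zs))"

definition delta :: "('v,'e) qpath \<Rightarrow> (('v,'e) qpath \<Rightarrow> 'k::field)" where
  "delta p = (\<lambda>q. if q = p then 1 else 0)"

definition vtx :: "'v \<Rightarrow> (('v,'e) qpath \<Rightarrow> 'k::field)" where
  "vtx v = delta (v, [])"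

definition arr :: "('e \<Rightarrow> 'v) \<Rightarrow> 'e \<Rightarrow> (('v,'e) qpath \<Rightarrow> 'k::field)" where
  "arr src a = delta (src a, [a])"

definition is_ideal :: "'v set \<Rightarrow> 'e set \<Rightarrow> ('e \<Rightarrow> 'v) \<Rightarrow> ('e \<Rightarrow> 'v) \<Rightarrow> (('v,'e) qpath \<Rightarrow> 'k::field) set \<Rightarrow> bool" where
  "is_ideal V E src tgt J \<longleftrightarrow>
     J \<subseteq> pathalg V E src tgt \<and> (\<lambda>_. 0) \<in> J \<and>
     (\<forall>x\<in>J. \<forall>y\<in>J. (\<lambda>p. x p + y p) \<in> J) \<and>
     (\<forall>c. \<forall>x\<in>J. (\<lambda>p. c * x p) \<in> J) \<and>
     (\<forall>a\<in>pathalg V E src tgt. \<forall>x\<in>J. pmult tgt a x \<in> J \<and> pmult tgt x a \<in> J)"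

definition ideal_gen :: "'v set \<Rightarrow> 'e set \<Rightarrow> ('e \<Rightarrow> 'v) \<Rightarrow> ('e \<Rightarrow> 'v) \<Rightarrow> (('v,'e) qpath \<Rightarrow> 'k::field) set \<Rightarrow> (('v,'e) qpath \<Rightarrow> 'k) set" where
  "ideal_gen V E src tgt S = \<Inter>{J. is_ideal V E src tgt J \<and> S \<subseteq> J}"

definition arrow_ideal :: "'v set \<Rightarrow> 'e set \<Rightarrow> ('e \<Rightarrow> 'v) \<Rightarrow> ('e \<Rightarrow> 'v) \<Rightarrow> (('v,'e) qpath \<Rightarrow> 'k::field) set" where
  "arrow_ideal V E src tgt = ideal_gen V E src tgt (arr src ` E)"

definition arrow_ideal_sq :: "'v set \<Rightarrow> 'e set \<Rightarrow> ('e \<Rightarrow> 'v) \<Rightarrow> ('e \<Rightarrow> 'v) \<Rightarrow> (('v,'e) qpath \<Rightarrow> 'k::field) set" where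
  "arrow_ideal_sq V E src tgt = ideal_gen V E src tgt
     {pmult tgt r s | r s. r \<in> arrow_ideal V E src tgt \<and> s \<in> arrow_ideal V E src tgt}"

text \<open>Differential operators k\<Gamma> \<rightarrow> k\<Gamma>/I, represented by maps D choosing a
  representative in k\<Gamma> of each value (equalities in k\<Gamma>/I become membership of
  differences in I); D is extensional (0 outside k\<Gamma>).\<close>

definition is_diff_op :: "'v set \<Rightarrow> 'e set \<Rightarrow> ('e \<Rightarrow> 'v) \<Rightarrow> ('e \<Rightarrow> 'v) \<Rightarrow> (('v,'e) qpath \<Rightarrow> 'k::field) set
     \<Rightarrow> ((('v,'e) qpath \<Rightarrow> 'k) \<Rightarrow> (('v,'e) qpath \<Rightarrow> 'k)) \<Rightarrow> bool" where
  "is_diff_op V E src tgt I D \<longleftrightarrow>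
     (\<forall>x. x \<notin> pathalg V E src tgt \<longrightarrow> D x = (\<lambda>_. 0)) \<and>
     (\<forall>x\<in>pathalg V E src tgt. D x \<in> pathalg V E src tgt) \<and>
     (\<forall>x\<in>pathalg V E src tgt. \<forall>y\<in>pathalg V E src tgt. \<forall>a b.
        (\<lambda>p. D (\<lambda>q. a * x q + b * y q) p - (a * D x p + b * D y p)) \<in> I) \<and>
     (\<forall>x\<in>pathalg V E src tgt. \<forall>y\<in>pathalg V E src tgt.
        (\<lambda>p. D (pmult tgt x y) p - (pmult tgt (D x) y p + pmult tgt x (D y) p)) \<in> I)"

definition is_inner_op :: "'v set \<Rightarrow> 'e set \<Rightarrow> ('e \<Rightarrow> 'v) \<Rightarrow> ('e \<Rightarrow> 'v) \<Rightarrow> (('v,'e) qpath \<Rightarrow> 'k::field) set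
     \<Rightarrow> ((('v,'e) qpath \<Rightarrow> 'k) \<Rightarrow> (('v,'e) qpath \<Rightarrow> 'k)) \<Rightarrow> bool" where
  "is_inner_op V E src tgt I D \<longleftrightarrow> is_diff_op V E src tgt I D \<and>
     (\<exists>m\<in>pathalg V E src tgt. \<forall>x\<in>pathalg V E src tgt.
        (\<lambda>p. D x p - (pmult tgt m x p - pmult tgt x m p)) \<in> I)"

definition lincomb :: "('f \<Rightarrow> 'k::field) \<Rightarrow> 'f set \<Rightarrow> ('f \<Rightarrow> 'x \<Rightarrow> 'y \<Rightarrow> 'k) \<Rightarrow> ('x \<Rightarrow> 'y \<Rightarrow> 'k)" where
  "lincomb c S ev = (\<lambda>x p. \<Sum>D\<in>S. c D * ev D x p)"

definition quot_dim :: "(('x \<Rightarrow> 'y \<Rightarrow> 'k::field)) set \<Rightarrow> ('x \<Rightarrow> 'y \<Rightarrow> 'k) set \<Rightarrow> nat \<Rightarrow> bool" where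
  "quot_dim A B n \<longleftrightarrow> (\<exists>S. finite S \<and> card S = n \<and> S \<subseteq> A \<and>
     (\<forall>c. lincomb c S id \<in> B \<longrightarrow> (\<forall>D\<in>S. c D = 0)) \<and>
     (\<forall>D\<in>A. \<exists>c. (\<lambda>x p. D x p - lincomb c S id x p) \<in> B))"

definition H1_dim :: "'v set \<Rightarrow> 'e set \<Rightarrow> ('e \<Rightarrow> 'v) \<Rightarrow> ('e \<Rightarrow> 'v) \<Rightarrow> (('v,'e) qpath \<Rightarrow> 'k::field) set \<Rightarrow> nat \<Rightarrow> bool" where
  "H1_dim V E src tgt I n \<longleftrightarrow>
     quot_dim {D. is_diff_op V E src tgt I D} {D. is_inner_op V E src tgt I D} n"

definition path_basis_mod :: "'v set \<Rightarrow> 'e set \<Rightarrow> ('e \<Rightarrow> 'v) \<Rightarrow> ('e \<Rightarrow> 'v) \<Rightarrow> (('v,'e) qpath \<Rightarrow> 'k::field) set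
     \<Rightarrow> ('v,'e) qpath set \<Rightarrow> bool" where
  "path_basis_mod V E src tgt I Q \<longleftrightarrow>
     (\<forall>q\<in>Q. pvalid V E src tgt q) \<and>
     (\<forall>F c. finite F \<and> F \<subseteq> Q \<and> (\<lambda>p. \<Sum>q\<in>F. c q * (delta q p :: 'k)) \<in> I \<longrightarrow> (\<forall>q\<in>F. c q = 0)) \<and>
     (\<forall>x\<in>pathalg V E src tgt. \<exists>F c. finite F \<and> F \<subseteq> Q \<and>
        (\<lambda>p. x p - (\<Sum>q\<in>F. c q * delta q p)) \<in> I)"

definition quiver_connected :: "'v set \<Rightarrow> 'e set \<Rightarrow> ('e \<Rightarrow> 'v) \<Rightarrow> ('e \<Rightarrow> 'v) \<Rightarrow> bool" where
  "quiver_connected V E src tgt \<longleftrightarrow> V \<noteq> {} \<and>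
     (\<forall>u\<in>V. \<forall>v\<in>V. (u, v) \<in> (\<Union>a\<in>E. {(src a, tgt a), (tgt a, src a)})\<^sup>*)"

definition B2 :: "'e set \<Rightarrow> ('e \<Rightarrow> 'v) \<Rightarrow> ('e \<Rightarrow> 'v) \<Rightarrow> ('v,'e) qpath set \<Rightarrow> ('e \<times> ('v,'e) qpath) set" where
  "B2 E src tgt Q = {(r, q). r \<in> E \<and> q \<in> Q \<and> src r = pstart q \<and> tgt r = pend tgt q}"

end

theory Submission
  imports Defs
begin

(* A derivation k\<Gamma> \<rightarrow> k\<Gamma>/I is determined modulo I by its values on vertices and arrows.
  Subtracting the inner derivation [m0, -] with m0 = sum_w D(e_w) e_w kills the vertices, after
  which D(a) lies in e_t(a) (k\<Gamma>/I) e_h(a); hence every derivation is, modulo inner ones, a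
  combination of the basic derivations D_(r,s) indexed by B_2.  The inner derivations are in turn
  combinations of the D_(a,a): [e_v, -] = sum_a inc(v,a) D_(a,a) with the signed incidence inc.
  Fixing a spanning tree, this lets us drop the |V| - 1 derivations D_(a,a) of tree arrows.  The
  remaining ones are independent modulo inner derivations: by acyclicity an element m commuting
  with all e_v modulo I is congruent to sum_v lambda_v e_v, so [m, -] acts on an arrow a by
  lambda_t(a) - lambda_h(a); this vanishes on tree arrows, so lambda is constant and [m, -] = 0. *)

section \<open>Paths and the path algebra\<close>

lemma pend_aux_append: "pend_aux tgt v (as @ bs) = pend_aux tgt (pend_aux tgt v as) bs"
  by (induction as arbitrary: v) auto

lemma pvalid_aux_start: "pvalid_aux V E src tgt v as \<Longrightarrow> v \<in> V"
  by (cases as) auto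

lemma pvalid_aux_append:
  "pvalid_aux V E src tgt v (as @ bs) \<longleftrightarrow>
     pvalid_aux V E src tgt v as \<and> pvalid_aux V E src tgt (pend_aux tgt v as) bs"
  by (induction as arbitrary: v) (auto dest: pvalid_aux_start)

lemma pvalid_aux_end: "pvalid_aux V E src tgt v as \<Longrightarrow> pend_aux tgt v as \<in> V"
  by (induction as arbitrary: v) auto

lemma pvalid_aux_set: "pvalid_aux V E src tgt v as \<Longrightarrow> set as \<subseteq> E"
  by (induction as arbitrary: v) auto

lemma long_path_has_cycle:
  assumes finV: "finite V" and val: "pvalid_aux V E src tgt v zs" and len: "card V \<le> length zs"
  obtains as cs bs where "zs = as @ cs @ bs" "cs \<noteq> []"
    "pend_aux tgt (pend_aux tgt v as) cs = pend_aux tgt v as"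
proof -
  let ?n = "length zs"
  define f where "f i = pend_aux tgt v (take i zs)" for i
  have fV: "f ` {0..?n} \<subseteq> V"
  proof
    fix y assume "y \<in> f ` {0..?n}"
    then obtain i where y: "y = f i" by auto
    have "pvalid_aux V E src tgt v (take i zs @ drop i zs)" using val by simp
    then have "pvalid_aux V E src tgt v (take i zs)" by (simp only: pvalid_aux_append)
    then show "y \<in> V" using y by (simp add: f_def pvalid_aux_end)
  qed
  have "card (f ` {0..?n}) \<le> card V" using fV finV by (rule card_mono[rotated])
  then have "card (f ` {0..?n}) < card {0..?n}" using len by simp
  then have "\<not> inj_on f {0..?n}" by (rule pigeonhole)
  then obtain i j where ij: "i \<in> {0..?n}" "j \<in> {0..?n}" "i \<noteq> j" "f i = f j"
    unfolding inj_on_def by blast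
  obtain i j where ij: "i < j" "j \<le> ?n" "f i = f j"
  proof (cases "i < j")
    case True then show ?thesis using that ij by auto
  next
    case False then show ?thesis using that[of j i] ij by auto
  qed
  define cs where "cs = drop i (take j zs)"
  have tj: "take j zs = take i zs @ cs"
    unfolding cs_def by (metis append_take_drop_id ij(1) less_imp_le_nat min.absorb1 take_take)
  show ?thesis
  proof (rule that)
    show "zs = take i zs @ cs @ drop j zs" by (metis append.assoc append_take_drop_id tj)
    show "cs \<noteq> []" using ij unfolding cs_def by simp
    show "pend_aux tgt (pend_aux tgt v (take i zs)) cs = pend_aux tgt v (take i zs)"
      using ij(3) unfolding f_def by (metis pend_aux_append tj)
  qed
qed

lemma pmult_delta_pt:
  fixes tgt :: "'e \<Rightarrow> 'v"
  shows "pmult tgt (delta (v, as)) (delta (w, bs)) (u, zs) =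
     (if pend_aux tgt v as = w then delta (v, as @ bs) (u, zs) else (0::'k::field))"
proof -
  let ?t = "\<lambda>i. (if (u, take i zs) = (v, as) then 1 else 0) *
        (if (pend_aux tgt u (take i zs), drop i zs) = (w, bs) then 1 else (0::'k))"
  have "pmult tgt (delta (v, as)) (delta (w, bs)) (u, zs) = (\<Sum>i\<in>{0..length zs}. ?t i)"
    unfolding pmult_def delta_def by simp
  also have "\<dots> = (\<Sum>i\<in>{0..length zs}. if i = length as then ?t (length as) else 0)"
    by (rule sum.cong) auto
  also have "\<dots> = (if pend_aux tgt v as = w then delta (v, as @ bs) (u, zs) else 0)"
    by (auto simp: delta_def) (metis append_take_drop_id)+
  finally show ?thesis .
qed

lemma pmult_delta:
  fixes tgt :: "'e \<Rightarrow> 'v"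
  shows "pmult tgt (delta (v, as)) (delta (w, bs)) =
     (if pend_aux tgt v as = w then delta (v, as @ bs) else (\<lambda>_. 0::'k::field))"
  by (rule ext) (simp add: split_paired_all pmult_delta_pt)

lemma sum_smult_delta:
  assumes "finite F"
  shows "(\<Sum>q\<in>F. c q * (delta q p :: 'k::field)) = (if p \<in> F then c p else 0)"
proof -
  have "(\<Sum>q\<in>F. c q * (delta q p :: 'k)) = (\<Sum>q\<in>F. if q = p then c q else 0)"
    by (rule sum.cong) (auto simp: delta_def)
  then show ?thesis using assms by (simp add: sum.delta')
qed

lemma delta_expansion:
  assumes "finite {q. x q \<noteq> 0}"
  shows "(\<lambda>p. \<Sum>q\<in>{q. x q \<noteq> 0}. x q * delta q p) = x"
  by (rule ext) (simp add: sum_smult_delta[OF assms])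

lemma pmult_sum_left:
  "pmult tgt (\<lambda>p. \<Sum>i\<in>F. c i * f i p) y = (\<lambda>p. \<Sum>i\<in>F. c i * pmult tgt (f i) y p)"
  by (rule ext) (auto simp: pmult_def sum_distrib_right sum_distrib_left mult.assoc intro: sum.swap)

lemma pmult_sum_right:
  "pmult tgt y (\<lambda>p. \<Sum>i\<in>F. c i * f i p) = (\<lambda>p. \<Sum>i\<in>F. c i * pmult tgt y (f i) p)"
  by (rule ext)
    (auto simp: pmult_def sum_distrib_right sum_distrib_left mult.assoc mult.left_commute intro: sum.swap)

lemma pmult_sum_sum:
  "pmult tgt (\<lambda>p. \<Sum>a\<in>A. x a * f a p) (\<lambda>p. \<Sum>b\<in>B. y b * g b p) =
     (\<lambda>p. \<Sum>a\<in>A. x a * (\<Sum>b\<in>B. y b * pmult tgt (f a) (g b) p))"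
  by (simp add: pmult_sum_left pmult_sum_right)

lemma pmult_lin_left:
  "pmult tgt (\<lambda>p. a * x p + b * y p) z = (\<lambda>p. a * pmult tgt x z p + b * pmult tgt y z p)"
  by (rule ext) (auto simp: pmult_def sum_distrib_left sum.distrib algebra_simps)

lemma pmult_lin_right:
  "pmult tgt z (\<lambda>p. a * x p + b * y p) = (\<lambda>p. a * pmult tgt z x p + b * pmult tgt z y p)"
  by (rule ext) (auto simp: pmult_def sum_distrib_left sum.distrib algebra_simps)

lemma pmult_diff_left:
  "pmult tgt (\<lambda>p. x p - y p) z = (\<lambda>p. pmult tgt x z p - pmult tgt y z p)"
  by (rule ext) (auto simp: pmult_def sum_subtractf algebra_simps)

lemma pmult_diff_right:
  "pmult tgt z (\<lambda>p. x p - y p) = (\<lambda>p. pmult tgt z x p - pmult tgt z y p)"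
  by (rule ext) (auto simp: pmult_def sum_subtractf algebra_simps)

lemma pmult_zero_left: "pmult tgt (\<lambda>_. 0) z = (\<lambda>_. 0)"
  by (rule ext) (auto simp: pmult_def)

lemma pmult_zero_right: "pmult tgt z (\<lambda>_. 0) = (\<lambda>_. 0)"
  by (rule ext) (auto simp: pmult_def)

lemma pmult_vertex_supported_left:
  assumes "\<forall>p. snd p \<noteq> [] \<longrightarrow> g p = 0"
  shows "pmult tgt g y (u, zs) = g (u, []) * y (u, zs)"
proof -
  have "pmult tgt g y (u, zs) = (\<Sum>i\<in>{0..length zs}.
     if i = 0 then g (u, []) * y (u, zs) else 0)"
    unfolding pmult_def prod.case
  proof (rule sum.cong)
    fix i assume i: "i \<in> {0..length zs}"
    show "g (u, take i zs) * y (pend_aux tgt u (take i zs), drop i zs) =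
      (if i = 0 then g (u, []) * y (u, zs) else 0)"
    proof (cases "i = 0")
      case False
      then have "take i zs \<noteq> []" using i by auto
      then show ?thesis using assms False by auto
    qed simp
  qed simp
  then show ?thesis by simp
qed

lemma pmult_vertex_supported_right:
  assumes "\<forall>p. snd p \<noteq> [] \<longrightarrow> g p = 0"
  shows "pmult tgt y g (u, zs) = y (u, zs) * g (pend_aux tgt u zs, [])"
proof -
  have "pmult tgt y g (u, zs) = (\<Sum>i\<in>{0..length zs}.
     if i = length zs then y (u, zs) * g (pend_aux tgt u zs, []) else 0)"
    unfolding pmult_def prod.case
  proof (rule sum.cong)
    fix i assume i: "i \<in> {0..length zs}"
    show "y (u, take i zs) * g (pend_aux tgt u (take i zs), drop i zs) =
      (if i = length zs then y (u, zs) * g (pend_aux tgt u zs, []) else 0)"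
    proof (cases "i = length zs")
      case False
      then have "drop i zs \<noteq> []" using i by auto
      then show ?thesis using assms False by auto
    qed simp
  qed simp
  then show ?thesis by simp
qed

lemma delta_vertex_supported: "\<forall>p. snd p \<noteq> [] \<longrightarrow> delta (w, []) p = 0"
  by (auto simp: delta_def)

lemma pmult_vtx_left: "pmult tgt (delta (w, [])) y (u, zs) = (if u = w then y (u, zs) else 0)"
  by (subst pmult_vertex_supported_left[OF delta_vertex_supported]) (simp add: delta_def)

lemma pmult_vtx_right:
  "pmult tgt y (delta (w, [])) (u, zs) = (if pend_aux tgt u zs = w then y (u, zs) else 0)"
  by (subst pmult_vertex_supported_right[OF delta_vertex_supported]) (simp add: delta_def)

lemma pmult_vtx_sandwich_pt:
  fixes g :: "('v,'e) qpath \<Rightarrow> 'k::field"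
  shows "pmult tgt (pmult tgt (delta (w, [])) g) (delta (w', [])) (u, zs) =
     (if u = w \<and> pend_aux tgt u zs = w' then g (u, zs) else 0)"
  by (simp add: pmult_vtx_left pmult_vtx_right)

lemma pmult_vtx_sandwich:
  fixes g :: "('v,'e) qpath \<Rightarrow> 'k::field"
  shows "pmult tgt (pmult tgt (delta (w, [])) g) (delta (w', [])) =
     (\<lambda>p. if fst p = w \<and> pend tgt p = w' then g p else 0)"
proof (rule ext)
  fix p :: "('v,'e) qpath"
  obtain u zs where "p = (u, zs)" by (cases p)
  then show "pmult tgt (pmult tgt (delta (w, [])) g) (delta (w', [])) p =
     (if fst p = w \<and> pend tgt p = w' then g p else 0)"
    by (auto simp: pmult_vtx_sandwich_pt pend_def)
qed

lemma pmult_assoc_pt: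
  "pmult tgt x (pmult tgt y z) (v, zs) = pmult tgt (pmult tgt x y) z (v, zs)"
proof -
  let ?n = "length zs"
  define G where "G i j = x (v, take i zs) * y (pend_aux tgt v (take i zs), take j (drop i zs)) *
      z (pend_aux tgt v (take (i + j) zs), drop (i + j) zs)" for i j
  have 1: "pmult tgt x (pmult tgt y z) (v, zs) = (\<Sum>i\<in>{..?n}. \<Sum>j\<in>{..?n - i}. G i j)"
    unfolding pmult_def G_def
    by (simp add: atLeast0AtMost sum_distrib_left mult.assoc take_add pend_aux_append add.commute)
  have 2: "(\<Sum>i\<in>{..?n}. \<Sum>j\<in>{..?n - i}. G i j) = (\<Sum>(i,j)\<in>{(i,j). i + j \<le> ?n}. G i j)"
  proof -
    have "(\<Sum>i\<in>{..?n}. \<Sum>j\<in>{..?n - i}. G i j) = (\<Sum>(i,j)\<in>Sigma {..?n} (\<lambda>i. {..?n - i}). G i j)"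
      by (rule sum.Sigma) auto
    also have "Sigma {..?n} (\<lambda>i. {..?n - i}) = {(i,j). i + j \<le> ?n}" by auto
    finally show ?thesis .
  qed
  have 3: "(\<Sum>(i,j)\<in>{(i,j). i + j \<le> ?n}. G i j) = (\<Sum>k\<in>{..?n}. \<Sum>i\<in>{..k}. G i (k - i))"
    by (rule sum.triangle_reindex_eq)
  have 4: "pmult tgt (pmult tgt x y) z (v, zs) = (\<Sum>k\<in>{..?n}. \<Sum>i\<in>{..k}. G i (k - i))"
    unfolding pmult_def
    apply (simp add: atLeast0AtMost sum_distrib_right)
    apply (rule sum.cong, simp)
    apply (rule sum.cong, simp)
    apply (simp add: G_def drop_take min_def)
    done
  show ?thesis using 1 2 3 4 by simp
qed

lemma pmult_assoc: "pmult tgt x (pmult tgt y z) = pmult tgt (pmult tgt x y) z"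
  by (rule ext) (simp add: split_paired_all pmult_assoc_pt)

lemma pmult_sum_left':
  "pmult tgt (\<lambda>p. \<Sum>i\<in>F. f i p) y = (\<lambda>p. \<Sum>i\<in>F. pmult tgt (f i) y p)"
  using pmult_sum_left[where c="\<lambda>_. 1" and tgt=tgt and F=F and f=f and y=y] by simp

lemma pmult_sum_right':
  "pmult tgt y (\<lambda>p. \<Sum>i\<in>F. f i p) = (\<lambda>p. \<Sum>i\<in>F. pmult tgt y (f i) p)"
  using pmult_sum_right[where c="\<lambda>_. 1" and tgt=tgt and F=F and f=f and y=y] by simp

lemma pmult_at_nil: "pmult tgt x y (v, []) = x (v, []) * y (v, [])"
  by (simp add: pmult_def)

lemma pmult_at_single:
  "pmult tgt x y (v, [a]) = x (v, []) * y (v, [a]) + x (v, [a]) * y (tgt a, [])"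
  by (simp add: pmult_def)

lemma pathalg_zero: "(\<lambda>_. 0) \<in> pathalg V E src tgt"
  by (simp add: pathalg_def)

lemma pathalg_lin:
  assumes "x \<in> pathalg V E src tgt" "y \<in> pathalg V E src tgt"
  shows "(\<lambda>p. a * x p + b * y p) \<in> pathalg V E src tgt"
proof -
  have "{p. a * x p + b * y p \<noteq> 0} \<subseteq> {p. x p \<noteq> 0} \<union> {p. y p \<noteq> 0}" by auto
  then show ?thesis using assms unfolding pathalg_def
    by (auto intro: finite_subset)
qed

lemma pathalg_add:
  assumes "x \<in> pathalg V E src tgt" "y \<in> pathalg V E src tgt"
  shows "(\<lambda>p. x p + y p) \<in> pathalg V E src tgt"
  using pathalg_lin[OF assms, of 1 1] by simp

lemma pathalg_diff:
  assumes "x \<in> pathalg V E src tgt" "y \<in> pathalg V E src tgt"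
  shows "(\<lambda>p. x p - y p) \<in> pathalg V E src tgt"
  using pathalg_lin[OF assms, of 1 "-1"] by simp

lemma pathalg_smult:
  assumes "x \<in> pathalg V E src tgt"
  shows "(\<lambda>p. a * x p) \<in> pathalg V E src tgt"
  using pathalg_lin[OF assms assms, of a 0] by simp

lemma pathalg_sum:
  assumes "finite F" "\<forall>i\<in>F. f i \<in> pathalg V E src tgt"
  shows "(\<lambda>p. \<Sum>i\<in>F. c i * f i p) \<in> pathalg V E src tgt"
  using assms
proof (induction F rule: finite_induct)
  case empty then show ?case by (simp add: pathalg_zero)
next
  case (insert i F)
  have "(\<lambda>p. \<Sum>i\<in>insert i F. c i * f i p) = (\<lambda>p. 1 * (\<Sum>i\<in>F. c i * f i p) + c i * f i p)"
    using insert by (simp add: add.commute)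
  moreover have "(\<lambda>p. 1 * (\<Sum>i\<in>F. c i * f i p) + c i * f i p) \<in> pathalg V E src tgt"
    by (rule pathalg_lin) (use insert in auto)
  ultimately show ?case by simp
qed

lemma pathalg_sum':
  assumes "finite F" "\<forall>i\<in>F. f i \<in> pathalg V E src tgt"
  shows "(\<lambda>p. \<Sum>i\<in>F. f i p) \<in> pathalg V E src tgt"
  using pathalg_sum[OF assms, of "\<lambda>_. 1"] by simp

lemma delta_pathalg: "pvalid V E src tgt p \<Longrightarrow> delta p \<in> pathalg V E src tgt"
  by (auto simp: pathalg_def delta_def)

lemma vtx_pathalg: "w \<in> V \<Longrightarrow> delta (w, []) \<in> pathalg V E src tgt"
  by (rule delta_pathalg) (simp add: pvalid_def)

lemma pmult_pathalg:
  assumes x: "x \<in> pathalg V E src tgt" and y: "y \<in> pathalg V E src tgt"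
  shows "pmult tgt x y \<in> pathalg V E src tgt"
proof -
  have key: "\<exists>i\<le>length zs. x (v, take i zs) \<noteq> 0 \<and> y (pend_aux tgt v (take i zs), drop i zs) \<noteq> 0"
    if "pmult tgt x y (v, zs) \<noteq> 0" for v zs
  proof -
    from that have "(\<Sum>i\<in>{0..length zs}. x (v, take i zs) * y (pend_aux tgt v (take i zs), drop i zs)) \<noteq> 0"
      by (simp add: pmult_def)
    then obtain i where "i \<in> {0..length zs}"
        "x (v, take i zs) * y (pend_aux tgt v (take i zs), drop i zs) \<noteq> 0"
      by (meson sum.not_neutral_contains_not_neutral)
    then show ?thesis by auto
  qed
  have "{p. pmult tgt x y p \<noteq> 0} \<subseteq>
      (\<lambda>(a, b). (fst a, snd a @ snd b)) ` ({p. x p \<noteq> 0} \<times> {p. y p \<noteq> 0})"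
  proof
    fix p assume "p \<in> {p. pmult tgt x y p \<noteq> 0}"
    then obtain v zs where p: "p = (v, zs)" "pmult tgt x y (v, zs) \<noteq> 0" by (cases p) auto
    then obtain i where "x (v, take i zs) \<noteq> 0" "y (pend_aux tgt v (take i zs), drop i zs) \<noteq> 0"
      using key by blast
    then show "p \<in> (\<lambda>(a, b). (fst a, snd a @ snd b)) ` ({p. x p \<noteq> 0} \<times> {p. y p \<noteq> 0})"
      using p by (auto intro!: image_eqI[where x="((v, take i zs), (pend_aux tgt v (take i zs), drop i zs))"])
  qed
  moreover have "finite ({p. x p \<noteq> 0} \<times> {p. y p \<noteq> 0})" using x y by (simp add: pathalg_def)
  ultimately have fin: "finite {p. pmult tgt x y p \<noteq> 0}" by (meson finite_imageI finite_subset)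
  have valid: "pvalid V E src tgt p" if "pmult tgt x y p \<noteq> 0" for p
  proof -
    obtain v zs where p: "p = (v, zs)" by (cases p)
    have "pmult tgt x y (v, zs) \<noteq> 0" using that p by simp
    then obtain i where "x (v, take i zs) \<noteq> 0" "y (pend_aux tgt v (take i zs), drop i zs) \<noteq> 0"
      using key by blast
    then have "pvalid_aux V E src tgt v (take i zs)"
        "pvalid_aux V E src tgt (pend_aux tgt v (take i zs)) (drop i zs)"
      using x y by (auto simp: pathalg_def pvalid_def)
    then have "pvalid_aux V E src tgt v (take i zs @ drop i zs)" by (simp only: pvalid_aux_append)
    then show ?thesis by (simp add: p pvalid_def)
  qed
  show ?thesis unfolding pathalg_def mem_Collect_eq using fin valid by blast
qed

section \<open>Linear extension and arrow substitution\<close>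

definition lin_ext :: "(('v,'e) qpath \<Rightarrow> ('v,'e) qpath \<Rightarrow> 'k::field) \<Rightarrow> (('v,'e) qpath \<Rightarrow> 'k)
    \<Rightarrow> (('v,'e) qpath \<Rightarrow> 'k)" where
  "lin_ext L x = (\<lambda>p'. \<Sum>p\<in>{p. x p \<noteq> 0}. x p * L p p')"

lemma lin_ext_eq: "finite F \<Longrightarrow> {p. x p \<noteq> 0} \<subseteq> F \<Longrightarrow> lin_ext L x = (\<lambda>p'. \<Sum>p\<in>F. x p * L p p')"
  unfolding lin_ext_def by (rule ext, rule sum.mono_neutral_left) auto

lemma lin_ext_delta: "lin_ext L (delta q) = L q"
proof -
  have "lin_ext L (delta q) = (\<lambda>p'. \<Sum>p\<in>{q}. delta q p * L p p')"
    by (rule lin_ext_eq) (auto simp: delta_def)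
  then show ?thesis by (simp add: delta_def)
qed

lemma lin_ext_zero: "lin_ext L (\<lambda>_. 0) = (\<lambda>_. 0)"
  by (simp add: lin_ext_def)

lemma lin_ext_sum:
  assumes F: "finite F" and G: "finite G" and sub: "\<forall>i\<in>F. {p. f i p \<noteq> 0} \<subseteq> G"
  shows "lin_ext L (\<lambda>p. \<Sum>i\<in>F. c i * f i p) = (\<lambda>p'. \<Sum>i\<in>F. c i * lin_ext L (f i) p')"
proof -
  have s: "{p. (\<Sum>i\<in>F. c i * f i p) \<noteq> 0} \<subseteq> G"
  proof
    fix p assume "p \<in> {p. (\<Sum>i\<in>F. c i * f i p) \<noteq> 0}"
    then have "(\<Sum>i\<in>F. c i * f i p) \<noteq> 0" by simp
    then obtain i where "i \<in> F" "c i * f i p \<noteq> 0"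
      by (rule sum.not_neutral_contains_not_neutral)
    then show "p \<in> G" using sub by auto
  qed
  have "lin_ext L (\<lambda>p. \<Sum>i\<in>F. c i * f i p) = (\<lambda>p'. \<Sum>p\<in>G. (\<Sum>i\<in>F. c i * f i p) * L p p')"
    by (rule lin_ext_eq[OF G s])
  also have "\<dots> = (\<lambda>p'. \<Sum>i\<in>F. c i * (\<Sum>p\<in>G. f i p * L p p'))"
    by (rule ext) (simp add: sum_distrib_right sum_distrib_left mult.assoc sum.swap[of _ G])
  also have "\<dots> = (\<lambda>p'. \<Sum>i\<in>F. c i * lin_ext L (f i) p')"
    using sub by (intro ext sum.cong refl) (simp add: lin_ext_eq[OF G])
  finally show ?thesis .
qed

lemma lin_ext_lin:
  assumes "finite {p. x p \<noteq> 0}" "finite {p. y p \<noteq> 0}"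
  shows "lin_ext L (\<lambda>p. a * x p + b * y p) = (\<lambda>p'. a * lin_ext L x p' + b * lin_ext L y p')"
proof -
  let ?G = "{p. x p \<noteq> 0} \<union> {p. y p \<noteq> 0}"
  have G: "finite ?G" using assms by simp
  have "lin_ext L (\<lambda>p. a * x p + b * y p) = (\<lambda>p'. \<Sum>p\<in>?G. (a * x p + b * y p) * L p p')"
    by (rule lin_ext_eq[OF G]) auto
  moreover have "lin_ext L x = (\<lambda>p'. \<Sum>p\<in>?G. x p * L p p')" by (rule lin_ext_eq[OF G]) auto
  moreover have "lin_ext L y = (\<lambda>p'. \<Sum>p\<in>?G. y p * L p p')" by (rule lin_ext_eq[OF G]) auto
  ultimately show ?thesis
    by (simp add: sum.distrib sum_distrib_left algebra_simps)
qed

lemma pmult_delta_nonzero: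
  fixes tgt :: "'e \<Rightarrow> 'v"
  assumes "pmult tgt (delta a) (delta b) p \<noteq> (0::'k::field)"
  shows "p = (fst a, snd a @ snd b)"
proof -
  obtain v as w bs where ab: "a = (v, as)" "b = (w, bs)" by (cases a, cases b)
  show ?thesis using assms unfolding ab pmult_delta by (simp add: delta_def split: if_splits)
qed

lemma lin_ext_leibniz:
  fixes x y :: "('v,'e) qpath \<Rightarrow> 'k::field" and tgt :: "'e \<Rightarrow> 'v"
  assumes x: "finite {p. x p \<noteq> 0}" and y: "finite {p. y p \<noteq> 0}"
    and H: "\<forall>a\<in>{p. x p \<noteq> 0}. \<forall>b\<in>{p. y p \<noteq> 0}. lin_ext L (pmult tgt (delta a) (delta b)) =
      (\<lambda>p. pmult tgt (L a) (delta b) p + pmult tgt (delta a) (L b) p)"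
  shows "lin_ext L (pmult tgt x y)
      = (\<lambda>p. pmult tgt (lin_ext L x) y p + pmult tgt x (lin_ext L y) p)"
proof -
  let ?Fx = "{p. x p \<noteq> 0}" and ?Fy = "{p. y p \<noteq> 0}"
  let ?G = "(\<lambda>(a, b). (fst a, snd a @ snd b)) ` (?Fx \<times> ?Fy)"
  have G: "finite ?G" using x y by simp
  have ex: "x = (\<lambda>p. \<Sum>a\<in>?Fx. x a * delta a p)" using delta_expansion[OF x] by simp
  have ey: "y = (\<lambda>p. \<Sum>b\<in>?Fy. y b * delta b p)" using delta_expansion[OF y] by simp
  have pxy: "pmult tgt x y = (\<lambda>p. \<Sum>a\<in>?Fx. x a * (\<Sum>b\<in>?Fy. y b * pmult tgt (delta a) (delta b) p))"
    by (subst ex, subst ey) (rule pmult_sum_sum)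
  have supp1: "\<forall>b\<in>?Fy. {p. pmult tgt (delta a) (delta b) p \<noteq> (0::'k)} \<subseteq> ?G" if "a \<in> ?Fx" for a
  proof (intro ballI subsetI)
    fix b p assume b: "b \<in> ?Fy" and "p \<in> {p. pmult tgt (delta a) (delta b) p \<noteq> (0::'k)}"
    then have "p = (fst a, snd a @ snd b)" by (auto intro: pmult_delta_nonzero)
    then show "p \<in> ?G" using that b by force
  qed
  have supp2: "\<forall>a\<in>?Fx. {p. (\<Sum>b\<in>?Fy. y b * pmult tgt (delta a) (delta b) p) \<noteq> 0} \<subseteq> ?G"
  proof (intro ballI subsetI)
    fix a p assume a: "a \<in> ?Fx" and "p \<in> {p. (\<Sum>b\<in>?Fy. y b * pmult tgt (delta a) (delta b) p) \<noteq> 0}"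
    then have "(\<Sum>b\<in>?Fy. y b * pmult tgt (delta a) (delta b) p) \<noteq> 0" by simp
    then obtain b where b: "b \<in> ?Fy" and nz: "y b * pmult tgt (delta a) (delta b) p \<noteq> 0"
      by (rule sum.not_neutral_contains_not_neutral)
    from nz have "p \<in> {p. pmult tgt (delta a) (delta b) p \<noteq> (0::'k)}" by simp
    then show "p \<in> ?G" using supp1[OF a] b by blast
  qed
  have "lin_ext L (pmult tgt x y) =
     (\<lambda>p'. \<Sum>a\<in>?Fx. x a * lin_ext L (\<lambda>p. \<Sum>b\<in>?Fy. y b * pmult tgt (delta a) (delta b) p) p')"
    unfolding pxy by (rule lin_ext_sum[OF x G supp2])
  also have "\<dots> = (\<lambda>p'. \<Sum>a\<in>?Fx. x a * (\<Sum>b\<in>?Fy. y b * lin_ext L (pmult tgt (delta a) (delta b)) p'))"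
    using supp1 by (intro ext sum.cong refl) (simp add: lin_ext_sum[OF y G])
  also have "\<dots> = (\<lambda>p'. \<Sum>a\<in>?Fx. x a * (\<Sum>b\<in>?Fy. y b *
       (pmult tgt (L a) (delta b) p' + pmult tgt (delta a) (L b) p')))"
    using H by (auto intro!: ext sum.cong)
  also have "\<dots> = (\<lambda>p. pmult tgt (lin_ext L x) y p + pmult tgt x (lin_ext L y) p)"
  proof -
    have lx: "lin_ext L x = (\<lambda>p'. \<Sum>a\<in>?Fx. x a * L a p')" by (simp add: lin_ext_def)
    have ly: "lin_ext L y = (\<lambda>p'. \<Sum>b\<in>?Fy. y b * L b p')" by (simp add: lin_ext_def)
    have 1: "pmult tgt (lin_ext L x) y
        = (\<lambda>p. \<Sum>a\<in>?Fx. x a * (\<Sum>b\<in>?Fy. y b * pmult tgt (L a) (delta b) p))"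
      unfolding lx by (subst ey) (rule pmult_sum_sum)
    have 2: "pmult tgt x (lin_ext L y)
        = (\<lambda>p. \<Sum>a\<in>?Fx. x a * (\<Sum>b\<in>?Fy. y b * pmult tgt (delta a) (L b) p))"
      unfolding ly by (subst ex) (rule pmult_sum_sum)
    show ?thesis unfolding 1 2
      by (rule ext) (simp add: distrib_left sum.distrib)
  qed
  finally show ?thesis .
qed

definition replace_at :: "'e list \<Rightarrow> 'e list \<Rightarrow> nat \<Rightarrow> 'e list" where
  "replace_at qs as i = take i as @ qs @ drop (Suc i) as"

text \<open>On a single path, \<open>D\<^bsub>r,q\<^esub>\<close> replaces one occurrence of the arrow \<open>r\<close> by
  the path \<open>qs\<close>, summed over all occurrences.\<close>

definition subst_arrow :: "'e \<Rightarrow> 'e list \<Rightarrow> ('v,'e) qpath \<Rightarrow> ('v,'e) qpath \<Rightarrow> 'k::field" where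
  "subst_arrow r qs p = (\<lambda>p'.
     \<Sum>i\<in>{i. i < length (snd p) \<and> snd p ! i = r}. delta (fst p, replace_at qs (snd p) i) p')"

lemma pvalid_aux_split_at:
  assumes "pvalid_aux V E src tgt v as" "i < length as" "as ! i = r"
  shows "pvalid_aux V E src tgt v (take i as) \<and> src r = pend_aux tgt v (take i as) \<and> r \<in> E \<and>
    pvalid_aux V E src tgt (tgt r) (drop (Suc i) as)"
proof -
  have "as = take i as @ r # drop (Suc i) as" using assms by (metis id_take_nth_drop)
  then have "pvalid_aux V E src tgt v (take i as @ r # drop (Suc i) as)" using assms by simp
  then show ?thesis by (simp only: pvalid_aux_append) auto
qed

lemma pend_aux_replace_at:
  assumes "pvalid_aux V E src tgt v as" "i < length as" "as ! i = r"
    and "pend_aux tgt (src r) qs = tgt r"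
  shows "pend_aux tgt v (replace_at qs as i) = pend_aux tgt v as"
proof -
  have e: "as = take i as @ r # drop (Suc i) as" using assms by (metis id_take_nth_drop)
  have s: "src r = pend_aux tgt v (take i as)" using pvalid_aux_split_at[OF assms(1-3)] by simp
  have "pend_aux tgt v as = pend_aux tgt (tgt r) (drop (Suc i) as)"
    by (subst e) (simp add: pend_aux_append)
  moreover have "pend_aux tgt v (replace_at qs as i) = pend_aux tgt (tgt r) (drop (Suc i) as)"
    unfolding replace_at_def using assms(4) s by (simp add: pend_aux_append)
  ultimately show ?thesis by simp
qed

lemma pvalid_aux_replace_at:
  assumes "pvalid_aux V E src tgt v as" "i < length as" "as ! i = r"
    and "pend_aux tgt (src r) qs = tgt r" and "pvalid_aux V E src tgt (src r) qs"
  shows "pvalid_aux V E src tgt v (replace_at qs as i)"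
proof -
  have vs: "pvalid_aux V E src tgt v (take i as)" "src r = pend_aux tgt v (take i as)"
    "pvalid_aux V E src tgt (tgt r) (drop (Suc i) as)"
    using pvalid_aux_split_at[OF assms(1-3)] by auto
  show ?thesis unfolding replace_at_def
    using vs assms(4,5) by (simp add: pvalid_aux_append pend_aux_append)
qed

lemma subst_arrow_append:
  "(subst_arrow r qs (v, as @ bs) :: ('v,'e) qpath \<Rightarrow> 'k::field) = (\<lambda>p.
     (\<Sum>i\<in>{i. i < length as \<and> as ! i = r}. delta (v, replace_at qs as i @ bs) p) +
     (\<Sum>j\<in>{j. j < length bs \<and> bs ! j = r}. delta (v, as @ replace_at qs bs j) p))"
proof (rule ext)
  fix p :: "('v,'e) qpath"
  let ?Ia = "{i. i < length as \<and> as ! i = r}" and ?Ib = "{j. j < length bs \<and> bs ! j = r}"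
  let ?I = "{i. i < length (as @ bs) \<and> (as @ bs) ! i = r}"
  let ?g = "\<lambda>i. delta (v, replace_at qs (as @ bs) i) p :: 'k"
  have I: "?I = ?Ia \<union> (\<lambda>j. length as + j) ` ?Ib"
  proof (intro set_eqI iffI)
    fix i assume "i \<in> ?I"
    then show "i \<in> ?Ia \<union> (\<lambda>j. length as + j) ` ?Ib"
      by (cases "i < length as") (auto simp: nth_append intro!: image_eqI[where x="i - length as"])
  qed (auto simp: nth_append)
  have fa: "finite ?Ia" by simp
  have fb: "finite ((\<lambda>j. length as + j) ` ?Ib)" by simp
  have dis: "?Ia \<inter> (\<lambda>j. length as + j) ` ?Ib = {}" by auto
  have "(\<Sum>i\<in>?I. ?g i) = (\<Sum>i\<in>?Ia. ?g i) + (\<Sum>i\<in>(\<lambda>j. length as + j) ` ?Ib. ?g i)"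
    unfolding I by (rule sum.union_disjoint[OF fa fb dis])
  also have "(\<Sum>i\<in>(\<lambda>j. length as + j) ` ?Ib. ?g i) = (\<Sum>j\<in>?Ib. ?g (length as + j))"
    by (simp add: sum.reindex inj_on_def)
  also have "(\<Sum>i\<in>?Ia. ?g i) = (\<Sum>i\<in>?Ia. delta (v, replace_at qs as i @ bs) p)"
    by (rule sum.cong) (auto simp: replace_at_def)
  also have "(\<Sum>j\<in>?Ib. ?g (length as + j)) = (\<Sum>j\<in>?Ib. delta (v, as @ replace_at qs bs j) p)"
    by (rule sum.cong) (auto simp: replace_at_def)
  finally show "(subst_arrow r qs (v, as @ bs) :: ('v,'e) qpath \<Rightarrow> 'k) p =
     (\<Sum>i\<in>?Ia. delta (v, replace_at qs as i @ bs) p) + (\<Sum>j\<in>?Ib. delta (v, as @ replace_at qs bs j) p)"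
    by (simp add: subst_arrow_def)
qed

context
  fixes V :: "'v set" and E :: "'e set" and src tgt :: "'e \<Rightarrow> 'v" and r :: 'e and qs :: "'e list"
  assumes qs_valid: "pvalid_aux V E src tgt (src r) qs"
    and qs_parallel: "pend_aux tgt (src r) qs = tgt r"
begin

lemma subst_arrow_pathalg:
  assumes "pvalid V E src tgt p"
  shows "(subst_arrow r qs p :: ('v,'e) qpath \<Rightarrow> 'k::field) \<in> pathalg V E src tgt"
  unfolding subst_arrow_def
proof (rule pathalg_sum', simp, intro ballI)
  fix i assume "i \<in> {i. i < length (snd p) \<and> snd p ! i = r}"
  then show "(delta (fst p, replace_at qs (snd p) i) :: ('v,'e) qpath \<Rightarrow> 'k) \<in> pathalg V E src tgt"
    using assms qs_valid qs_parallel
        by (intro delta_pathalg) (auto simp: pvalid_def intro: pvalid_aux_replace_at)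
qed

lemma lin_ext_subst_arrow_pathalg:
  assumes "x \<in> pathalg V E src tgt"
  shows "lin_ext (subst_arrow r qs) (x :: ('v,'e) qpath \<Rightarrow> 'k::field) \<in> pathalg V E src tgt"
  unfolding lin_ext_def
proof (rule pathalg_sum)
  show "finite {p. x p \<noteq> 0}" using assms by (simp add: pathalg_def)
  show "\<forall>p\<in>{p. x p \<noteq> 0}. (subst_arrow r qs p :: ('v,'e) qpath \<Rightarrow> 'k) \<in> pathalg V E src tgt"
  proof
    fix p assume "p \<in> {p. x p \<noteq> 0}"
    then have "pvalid V E src tgt p" using assms unfolding pathalg_def by blast
    then show "(subst_arrow r qs p :: ('v,'e) qpath \<Rightarrow> 'k) \<in> pathalg V E src tgt"
        by (rule subst_arrow_pathalg)
  qed
qed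

lemma lin_ext_subst_arrow_leibniz:
  assumes a: "pvalid V E src tgt a" and b: "pvalid V E src tgt b"
  shows "lin_ext (subst_arrow r qs) (pmult tgt (delta a) (delta b)) =
    (\<lambda>p. pmult tgt (subst_arrow r qs a) (delta b) p + pmult tgt (delta a) (subst_arrow r qs b) p :: 'k::field)"
proof -
  obtain v as where av: "a = (v, as)" by (cases a)
  obtain w bs where bw: "b = (w, bs)" by (cases b)
  have va: "pvalid_aux V E src tgt v as" using a av by (simp add: pvalid_def)
  let ?Ia = "{i. i < length as \<and> as ! i = r}" and ?Ib = "{j. j < length bs \<and> bs ! j = r}"
  have L1: "pmult tgt (subst_arrow r qs (v, as)) (delta (w, bs)) = (\<lambda>p.
      \<Sum>i\<in>?Ia. if pend_aux tgt v as = w then delta (v, replace_at qs as i @ bs) p else (0::'k))"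
    unfolding subst_arrow_def fst_conv snd_conv pmult_sum_left'
    by (intro ext sum.cong refl) (simp add: pmult_delta pend_aux_replace_at[OF va _ _ qs_parallel])
  have L2: "pmult tgt (delta (v, as)) (subst_arrow r qs (w, bs)) = (\<lambda>p.
      \<Sum>j\<in>?Ib. if pend_aux tgt v as = w then delta (v, as @ replace_at qs bs j) p else (0::'k))"
    unfolding subst_arrow_def fst_conv snd_conv pmult_sum_right'
    by (intro ext sum.cong refl) (simp add: pmult_delta)
  show ?thesis
  proof (cases "pend_aux tgt v as = w")
    case True
    then show ?thesis unfolding av bw L1 L2
      by (simp add: pmult_delta lin_ext_delta subst_arrow_append)
  next
    case False
    then show ?thesis unfolding av bw L1 L2
      by (simp add: pmult_delta lin_ext_zero)
  qed
qed

end

text \<open>The derivation \<open>D\<^bsub>r,q\<^esub>\<close> of \<open>B2\<close>, normalised to \<open>0\<close> outside the path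
  algebra as \<open>is_diff_op\<close> requires.\<close>

definition basic_der :: "'v set \<Rightarrow> 'e set \<Rightarrow> ('e \<Rightarrow> 'v) \<Rightarrow> ('e \<Rightarrow> 'v) \<Rightarrow> 'e \<Rightarrow> ('v,'e) qpath
    \<Rightarrow> (('v,'e) qpath \<Rightarrow> 'k::field) \<Rightarrow> (('v,'e) qpath \<Rightarrow> 'k)" where
  "basic_der V E src tgt r q x =
     (if x \<in> pathalg V E src tgt then lin_ext (subst_arrow r (snd q)) x else (\<lambda>_. 0))"

section \<open>Ideals and derivations modulo an ideal\<close>

locale path_ideal =
  fixes V :: "'v set" and E :: "'e set" and src tgt :: "'e \<Rightarrow> 'v"
    and I :: "(('v,'e) qpath \<Rightarrow> 'k::field) set"
  assumes ideal: "is_ideal V E src tgt I"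
begin

abbreviation "PA \<equiv> pathalg V E src tgt"

lemma ideal_zero: "(\<lambda>_. 0) \<in> I"
  using ideal by (auto simp: is_ideal_def)

lemma ideal_add: "x \<in> I \<Longrightarrow> y \<in> I \<Longrightarrow> (\<lambda>p. x p + y p) \<in> I"
  using ideal by (auto simp: is_ideal_def)

lemma ideal_smult: "x \<in> I \<Longrightarrow> (\<lambda>p. c * x p) \<in> I"
  using ideal by (auto simp: is_ideal_def)

lemma ideal_lin: "x \<in> I \<Longrightarrow> y \<in> I \<Longrightarrow> (\<lambda>p. a * x p + b * y p) \<in> I"
proof -
  assume "x \<in> I" "y \<in> I"
  then have "(\<lambda>p. a * x p) \<in> I" "(\<lambda>p. b * y p) \<in> I" by (simp_all add: ideal_smult)
  from ideal_add[OF this] show ?thesis .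
qed

lemma ideal_diff: "x \<in> I \<Longrightarrow> y \<in> I \<Longrightarrow> (\<lambda>p. x p - y p) \<in> I"
  using ideal_lin[of x y 1 "-1"] by simp

lemma ideal_uminus: "x \<in> I \<Longrightarrow> (\<lambda>p. - x p) \<in> I"
  using ideal_smult[of x "-1"] by simp

lemma ideal_uminus_iff: "(\<lambda>p. - x p) \<in> I \<longleftrightarrow> x \<in> I"
proof
  assume "(\<lambda>p. - x p) \<in> I"
  from ideal_uminus[OF this] show "x \<in> I" by simp
qed (rule ideal_uminus)

lemma ideal_sum: "finite F \<Longrightarrow> \<forall>i\<in>F. f i \<in> I \<Longrightarrow> (\<lambda>p. \<Sum>i\<in>F. c i * f i p) \<in> I"
proof (induction F rule: finite_induct)
  case empty then show ?case by (simp add: ideal_zero)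
next
  case (insert i F)
  have "(\<lambda>p. \<Sum>i\<in>insert i F. c i * f i p) = (\<lambda>p. 1 * (\<Sum>i\<in>F. c i * f i p) + c i * f i p)"
    using insert by (simp add: add.commute)
  moreover have "(\<lambda>p. 1 * (\<Sum>i\<in>F. c i * f i p) + c i * f i p) \<in> I"
    by (rule ideal_lin) (use insert in auto)
  ultimately show ?case by simp
qed

lemma ideal_sum': "finite F \<Longrightarrow> \<forall>i\<in>F. f i \<in> I \<Longrightarrow> (\<lambda>p. \<Sum>i\<in>F. f i p) \<in> I"
  using ideal_sum[of F f "\<lambda>_. 1"] by simp

lemma ideal_mult_left: "a \<in> PA \<Longrightarrow> x \<in> I \<Longrightarrow> pmult tgt a x \<in> I"
  using ideal by (auto simp: is_ideal_def)

lemma ideal_mult_right: "a \<in> PA \<Longrightarrow> x \<in> I \<Longrightarrow> pmult tgt x a \<in> I"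
  using ideal by (auto simp: is_ideal_def)

lemma ideal_cong_trans: "(\<lambda>p. x p - y p) \<in> I \<Longrightarrow> (\<lambda>p. y p - z p) \<in> I \<Longrightarrow> (\<lambda>p. x p - z p) \<in> I"
  using ideal_add[of "\<lambda>p. x p - y p" "\<lambda>p. y p - z p"] by simp

lemma ideal_cong_mult_left: "a \<in> PA \<Longrightarrow> (\<lambda>p. x p - y p) \<in> I \<Longrightarrow>
   (\<lambda>p. pmult tgt a x p - pmult tgt a y p) \<in> I"
  using ideal_mult_left[of a "\<lambda>p. x p - y p"] by (simp add: pmult_diff_right)

lemma ideal_cong_mult_right: "a \<in> PA \<Longrightarrow> (\<lambda>p. x p - y p) \<in> I \<Longrightarrow>
   (\<lambda>p. pmult tgt x a p - pmult tgt y a p) \<in> I"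
  using ideal_mult_right[of a "\<lambda>p. x p - y p"] by (simp add: pmult_diff_left)

end

lemma ideal_gen_le: "is_ideal V E src tgt J \<Longrightarrow> S \<subseteq> J \<Longrightarrow> ideal_gen V E src tgt S \<subseteq> J"
  unfolding ideal_gen_def by blast

definition pathalg_ge1 :: "'v set \<Rightarrow> 'e set \<Rightarrow> ('e \<Rightarrow> 'v) \<Rightarrow> ('e \<Rightarrow> 'v)
    \<Rightarrow> (('v,'e) qpath \<Rightarrow> 'k::field) set" where
  "pathalg_ge1 V E src tgt = {x \<in> pathalg V E src tgt. \<forall>v. x (v, []) = 0}"

definition pathalg_ge2 :: "'v set \<Rightarrow> 'e set \<Rightarrow> ('e \<Rightarrow> 'v) \<Rightarrow> ('e \<Rightarrow> 'v)
    \<Rightarrow> (('v,'e) qpath \<Rightarrow> 'k::field) set" where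
  "pathalg_ge2 V E src tgt = {x \<in> pathalg V E src tgt. \<forall>v. x (v, []) = 0 \<and> (\<forall>a. x (v, [a]) = 0)}"

lemma is_ideal_pathalg_ge1: "is_ideal V E src tgt (pathalg_ge1 V E src tgt)"
  unfolding is_ideal_def pathalg_ge1_def
  by (auto simp: pathalg_zero pathalg_add pathalg_smult pmult_pathalg pmult_at_nil)

lemma is_ideal_pathalg_ge2: "is_ideal V E src tgt (pathalg_ge2 V E src tgt)"
  unfolding is_ideal_def pathalg_ge2_def
  by (auto simp: pathalg_zero pathalg_add pathalg_smult pmult_pathalg pmult_at_nil pmult_at_single)

lemma arrow_ideal_subset_ge1:
  assumes "\<forall>a\<in>E. src a \<in> V \<and> tgt a \<in> V"
  shows "arrow_ideal V E src tgt \<subseteq> pathalg_ge1 V E src tgt"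
  unfolding arrow_ideal_def
proof (rule ideal_gen_le[OF is_ideal_pathalg_ge1])
  show "arr src ` E \<subseteq> pathalg_ge1 V E src tgt"
  proof
    fix x assume "x \<in> arr src ` E"
    then obtain a where a: "a \<in> E" "x = arr src a" by auto
    have "pvalid V E src tgt (src a, [a])" using a assms by (simp add: pvalid_def)
    then show "x \<in> pathalg_ge1 V E src tgt" using a
      by (auto simp: pathalg_ge1_def arr_def delta_pathalg) (simp add: delta_def)
  qed
qed

lemma arrow_ideal_sq_subset_ge2:
  assumes "\<forall>a\<in>E. src a \<in> V \<and> tgt a \<in> V"
  shows "arrow_ideal_sq V E src tgt \<subseteq> pathalg_ge2 V E src tgt"
  unfolding arrow_ideal_sq_def
proof (rule ideal_gen_le[OF is_ideal_pathalg_ge2])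
  show "{pmult tgt r s |r s. r \<in> arrow_ideal V E src tgt \<and> s \<in> arrow_ideal V E src tgt}
     \<subseteq> pathalg_ge2 V E src tgt"
  proof
    fix x assume "x \<in> {pmult tgt r s |r s. r \<in> arrow_ideal V E src tgt
        \<and> s \<in> arrow_ideal V E src tgt}"
    then obtain r s where rs: "x = pmult tgt r s" "r \<in> pathalg_ge1 V E src tgt"
        "s \<in> pathalg_ge1 V E src tgt"
      using arrow_ideal_subset_ge1[OF assms] by blast
    then show "x \<in> pathalg_ge2 V E src tgt"
      by (auto simp: pathalg_ge1_def pathalg_ge2_def pmult_pathalg pmult_at_nil pmult_at_single)
  qed
qed

text \<open>\<open>is_diff_op\<close> without the normalisation outside the path algebra, which inner
  derivations do not satisfy.\<close>

definition is_der :: "'v set \<Rightarrow> 'e set \<Rightarrow> ('e \<Rightarrow> 'v) \<Rightarrow> ('e \<Rightarrow> 'v) \<Rightarrow> (('v,'e) qpath \<Rightarrow> 'k::field) set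
     \<Rightarrow> ((('v,'e) qpath \<Rightarrow> 'k) \<Rightarrow> (('v,'e) qpath \<Rightarrow> 'k)) \<Rightarrow> bool" where
  "is_der V E src tgt I D \<longleftrightarrow>
     (\<forall>x\<in>pathalg V E src tgt. D x \<in> pathalg V E src tgt) \<and>
     (\<forall>x\<in>pathalg V E src tgt. \<forall>y\<in>pathalg V E src tgt. \<forall>a b.
        (\<lambda>p. D (\<lambda>q. a * x q + b * y q) p - (a * D x p + b * D y p)) \<in> I) \<and>
     (\<forall>x\<in>pathalg V E src tgt. \<forall>y\<in>pathalg V E src tgt.
        (\<lambda>p. D (pmult tgt x y) p - (pmult tgt (D x) y p + pmult tgt x (D y) p)) \<in> I)"

lemma is_diff_op_iff_is_der: "is_diff_op V E src tgt I D \<longleftrightarrow>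
   (\<forall>x. x \<notin> pathalg V E src tgt \<longrightarrow> D x = (\<lambda>_. 0)) \<and> is_der V E src tgt I D"
  unfolding is_diff_op_def is_der_def by blast

definition inner_der :: "('e \<Rightarrow> 'v) \<Rightarrow> (('v,'e) qpath \<Rightarrow> 'k::field) \<Rightarrow> (('v,'e) qpath \<Rightarrow> 'k)
    \<Rightarrow> (('v,'e) qpath \<Rightarrow> 'k)" where
  "inner_der tgt m x = (\<lambda>p. pmult tgt m x p - pmult tgt x m p)"

lemma inner_der_vtx:
  fixes g :: "('v,'e) qpath \<Rightarrow> 'k::field" and tgt :: "'e \<Rightarrow> 'v"
  shows "inner_der tgt g (delta (v, [])) =
     (\<lambda>p. ((if pend tgt p = v then 1 else 0) - (if fst p = v then 1 else 0)) * g p)"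
proof (rule ext)
  fix p :: "('v,'e) qpath"
  obtain u zs where p: "p = (u, zs)" by (cases p)
  show "inner_der tgt g (delta (v, [])) p =
      ((if pend tgt p = v then 1 else 0) - (if fst p = v then 1 else 0)) * g p"
    unfolding p inner_der_def by (simp add: pmult_vtx_left pmult_vtx_right pend_def algebra_simps)
qed

lemma inner_der_vertex_supported_arr:
  fixes g :: "('v,'e) qpath \<Rightarrow> 'k::field" and src tgt :: "'e \<Rightarrow> 'v"
  assumes "\<forall>p. snd p \<noteq> [] \<longrightarrow> g p = 0"
  shows "inner_der tgt g (delta (src a, [a])) =
    (\<lambda>p. (g (src a, []) - g (tgt a, [])) * delta (src a, [a]) p)"
proof (rule ext)
  fix p :: "('v,'e) qpath"
  obtain u zs where p: "p = (u, zs)" by (cases p)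
  show "inner_der tgt g (delta (src a, [a])) p
      = (g (src a, []) - g (tgt a, [])) * delta (src a, [a]) p"
    unfolding p inner_der_def pmult_vertex_supported_left[OF assms]
      pmult_vertex_supported_right[OF assms]
    by (auto simp: delta_def algebra_simps)
qed

context path_ideal begin

lemma is_der_pathalg: "is_der V E src tgt I D \<Longrightarrow> x \<in> PA \<Longrightarrow> D x \<in> PA"
  unfolding is_der_def by blast

lemma is_der_linD: "is_der V E src tgt I D \<Longrightarrow> x \<in> PA \<Longrightarrow> y \<in> PA \<Longrightarrow>
   (\<lambda>p. D (\<lambda>q. a * x q + b * y q) p - (a * D x p + b * D y p)) \<in> I"
  unfolding is_der_def by blast

lemma is_der_leibnizD: "is_der V E src tgt I D \<Longrightarrow> x \<in> PA \<Longrightarrow> y \<in> PA \<Longrightarrow>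
   (\<lambda>p. D (pmult tgt x y) p - (pmult tgt (D x) y p + pmult tgt x (D y) p)) \<in> I"
  unfolding is_der_def by blast

lemma is_der_lin:
  assumes d1: "is_der V E src tgt I D1" and d2: "is_der V E src tgt I D2"
  shows "is_der V E src tgt I (\<lambda>x p. a * D1 x p + b * D2 x p)"
    (is "is_der V E src tgt I ?D")
  unfolding is_der_def
proof (intro conjI ballI allI)
  fix x :: "('v,'e) qpath \<Rightarrow> 'k" assume "x \<in> PA"
  then show "?D x \<in> PA"
    by (intro pathalg_lin is_der_pathalg[OF d1] is_der_pathalg[OF d2])
next
  fix x y :: "('v,'e) qpath \<Rightarrow> 'k" and c d :: 'k assume x: "x \<in> PA" and y: "y \<in> PA"
  from ideal_lin[OF is_der_linD[OF d1 x y, of c d] is_der_linD[OF d2 x y, of c d], of a b]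
  show "(\<lambda>p. ?D (\<lambda>q. c * x q + d * y q) p - (c * ?D x p + d * ?D y p)) \<in> I"
    by (simp add: algebra_simps)
next
  fix x y :: "('v,'e) qpath \<Rightarrow> 'k" assume x: "x \<in> PA" and y: "y \<in> PA"
  from ideal_lin[OF is_der_leibnizD[OF d1 x y] is_der_leibnizD[OF d2 x y], of a b]
  show "(\<lambda>p. ?D (pmult tgt x y) p - (pmult tgt (?D x) y p + pmult tgt x (?D y) p)) \<in> I"
    by (simp add: pmult_lin_left pmult_lin_right algebra_simps)
qed

lemma is_der_inner_der:
  assumes m: "m \<in> PA"
  shows "is_der V E src tgt I (inner_der tgt m)"
  unfolding is_der_def
proof (intro conjI ballI allI)
  fix x :: "('v,'e) qpath \<Rightarrow> 'k" assume "x \<in> PA"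
  then show "inner_der tgt m x \<in> PA" unfolding inner_der_def
    by (intro pathalg_diff pmult_pathalg m)
next
  fix x y :: "('v,'e) qpath \<Rightarrow> 'k" and c d :: 'k assume x: "x \<in> PA" and y: "y \<in> PA"
  have "(\<lambda>p. inner_der tgt m (\<lambda>q. c * x q + d * y q) p
      - (c * inner_der tgt m x p + d * inner_der tgt m y p)) = (\<lambda>_. 0)"
    unfolding inner_der_def by (rule ext) (simp add: pmult_lin_left pmult_lin_right algebra_simps)
  then show "(\<lambda>p. inner_der tgt m (\<lambda>q. c * x q + d * y q) p
      - (c * inner_der tgt m x p + d * inner_der tgt m y p)) \<in> I"
    by (simp add: ideal_zero)
next
  fix x y :: "('v,'e) qpath \<Rightarrow> 'k" assume x: "x \<in> PA" and y: "y \<in> PA"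
  have "(\<lambda>p. inner_der tgt m (pmult tgt x y) p
      - (pmult tgt (inner_der tgt m x) y p + pmult tgt x (inner_der tgt m y) p)) = (\<lambda>_. 0)"
    unfolding inner_der_def by (rule ext) (simp add: pmult_diff_left pmult_diff_right pmult_assoc)
  then show "(\<lambda>p. inner_der tgt m (pmult tgt x y) p
      - (pmult tgt (inner_der tgt m x) y p + pmult tgt x (inner_der tgt m y) p)) \<in> I"
    by (simp add: ideal_zero)
qed

lemma inner_der_lin: "inner_der tgt (\<lambda>p. a * m p + b * m' p) x
    = (\<lambda>p. a * inner_der tgt m x p + b * inner_der tgt m' x p)"
  unfolding inner_der_def by (rule ext) (simp add: pmult_lin_left pmult_lin_right algebra_simps)

lemma inner_der_ideal: "m \<in> I \<Longrightarrow> x \<in> PA \<Longrightarrow> inner_der tgt m x \<in> I"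
  unfolding inner_der_def by (intro ideal_diff ideal_mult_left ideal_mult_right)

lemma inner_der_cong:
  assumes "(\<lambda>p. m p - g p) \<in> I" "x \<in> PA"
  shows "(\<lambda>p. inner_der tgt m x p - inner_der tgt g x p) \<in> I"
proof -
  have "inner_der tgt (\<lambda>p. m p - g p) x = (\<lambda>p. inner_der tgt m x p - inner_der tgt g x p)"
    unfolding inner_der_def by (rule ext) (simp add: pmult_diff_left pmult_diff_right)
  then show ?thesis using inner_der_ideal[OF assms] by simp
qed

lemma is_der_zero: assumes d: "is_der V E src tgt I D" shows "D (\<lambda>_. 0) \<in> I"
proof -
  have "(\<lambda>p. D (\<lambda>q. 0 * (0::'k) + 0 * 0) p - (0 * D (\<lambda>_. 0) p + 0 * D (\<lambda>_. 0) p)) \<in> I"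
    using is_der_linD[OF d pathalg_zero pathalg_zero, of 0 0] by simp
  then show ?thesis by simp
qed

lemma is_der_vtx_orth:
  assumes d: "is_der V E src tgt I D" and v: "v \<in> V" and w: "w \<in> V" and vw: "v \<noteq> w"
  shows "(\<lambda>p. pmult tgt (D (delta (w, []))) (delta (v, [])) p +
      pmult tgt (delta (w, [])) (D (delta (v, []))) p) \<in> I"
proof -
  have "pmult tgt (delta (w, [])) (delta (v, [])) = (\<lambda>_. 0::'k)" using vw by (simp add: pmult_delta)
  with is_der_leibnizD[OF d vtx_pathalg[OF w] vtx_pathalg[OF v]]
  have "(\<lambda>p. D (\<lambda>_. 0) p - (pmult tgt (D (delta (w, []))) (delta (v, [])) p +
      pmult tgt (delta (w, [])) (D (delta (v, []))) p)) \<in> I" by simp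
  from ideal_diff[OF is_der_zero[OF d] this] show ?thesis by simp
qed

lemma is_der_vtx_idem:
  assumes d: "is_der V E src tgt I D" and w: "w \<in> V"
  shows "(\<lambda>p. D (delta (w, [])) p - (pmult tgt (D (delta (w, []))) (delta (w, [])) p +
      pmult tgt (delta (w, [])) (D (delta (w, []))) p)) \<in> I"
  using is_der_leibnizD[OF d vtx_pathalg[OF w] vtx_pathalg[OF w]] by (simp add: pmult_delta)

lemma is_der_paths_ideal:
  assumes d: "is_der V E src tgt I D"
    and ends: "\<forall>a\<in>E. src a \<in> V \<and> tgt a \<in> V"
    and hv: "\<forall>v\<in>V. D (delta (v, [])) \<in> I"
    and ha: "\<forall>a\<in>E. D (delta (src a, [a])) \<in> I"
  shows "pvalid_aux V E src tgt v zs \<Longrightarrow> D (delta (v, zs)) \<in> I"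
proof (induction zs arbitrary: v)
  case Nil then show ?case using hv by simp
next
  case (Cons a zs)
  have a: "a \<in> E" "src a = v" "pvalid_aux V E src tgt (tgt a) zs" using Cons.prems by auto
  have eq: "delta (v, a # zs) = pmult tgt (delta (src a, [a])) (delta (tgt a, zs))"
    using a by (simp add: pmult_delta)
  have pa: "delta (src a, [a]) \<in> PA" using a ends by (intro delta_pathalg) (auto simp: pvalid_def)
  have pz: "delta (tgt a, zs) \<in> PA" using a by (intro delta_pathalg) (simp add: pvalid_def)
  have l: "(\<lambda>p. D (pmult tgt (delta (src a, [a])) (delta (tgt a, zs))) p -
     (pmult tgt (D (delta (src a, [a]))) (delta (tgt a, zs)) p +
      pmult tgt (delta (src a, [a])) (D (delta (tgt a, zs))) p)) \<in> I"
    by (rule is_der_leibnizD[OF d pa pz])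
  have s: "(\<lambda>p. pmult tgt (D (delta (src a, [a]))) (delta (tgt a, zs)) p +
      pmult tgt (delta (src a, [a])) (D (delta (tgt a, zs))) p) \<in> I"
    by (intro ideal_add ideal_mult_right ideal_mult_left pa pz) (use ha a Cons.IH in auto)
  from ideal_add[OF l s] show ?case unfolding eq by simp
qed

lemma is_der_ideal_if_paths:
  assumes d: "is_der V E src tgt I D"
    and paths: "\<forall>q. pvalid V E src tgt q \<longrightarrow> D (delta q) \<in> I" and x: "x \<in> PA"
  shows "D x \<in> I"
proof -
  have comb: "D (\<lambda>p. \<Sum>q\<in>F. c q * delta q p) \<in> I"
    if "finite F" "\<forall>q\<in>F. pvalid V E src tgt q" for F c
    using that
  proof (induction F rule: finite_induct)
    case empty then show ?case using is_der_zero[OF d] by simp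
  next
    case (insert q F)
    let ?S = "\<lambda>p. \<Sum>q\<in>F. c q * delta q p"
    have SPA: "?S \<in> PA" using insert by (intro pathalg_sum) (auto intro: delta_pathalg)
    have qPA: "delta q \<in> PA" using insert by (auto intro: delta_pathalg)
    have Dq: "D (delta q) \<in> I" using insert paths by blast
    have "(\<lambda>p. D (\<lambda>r. 1 * ?S r + c q * delta q r) p - (1 * D ?S p + c q * D (delta q) p)) \<in> I"
      by (rule is_der_linD[OF d SPA qPA])
    moreover have "(\<lambda>p. 1 * D ?S p + c q * D (delta q) p) \<in> I"
      using insert Dq by (intro ideal_lin) auto
    ultimately have "(\<lambda>p. D (\<lambda>r. 1 * ?S r + c q * delta q r) p) \<in> I"
      using ideal_add by fastforce
    moreover have "(\<lambda>r. 1 * ?S r + c q * delta q r) = (\<lambda>p. \<Sum>q\<in>insert q F. c q * delta q p)"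
      using insert by (simp add: add.commute)
    ultimately show ?case by simp
  qed
  have "D (\<lambda>p. \<Sum>q\<in>{q. x q \<noteq> 0}. x q * delta q p) \<in> I"
    using x by (intro comb) (auto simp: pathalg_def)
  moreover have "finite {q. x q \<noteq> 0}" using x by (simp add: pathalg_def)
  ultimately show ?thesis by (simp add: delta_expansion)
qed

lemma is_der_vanishes:
  assumes d: "is_der V E src tgt I D"
    and ends: "\<forall>a\<in>E. src a \<in> V \<and> tgt a \<in> V"
    and hv: "\<forall>v\<in>V. D (delta (v, [])) \<in> I"
    and ha: "\<forall>a\<in>E. D (delta (src a, [a])) \<in> I"
    and x: "x \<in> PA"
  shows "D x \<in> I"
  using is_der_ideal_if_paths[OF d _ x] is_der_paths_ideal[OF d ends hv ha]
  by (simp add: pvalid_def)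

lemma is_der_zero_op: "is_der V E src tgt I (\<lambda>x p. 0)"
proof -
  have "inner_der tgt (\<lambda>_. 0) = (\<lambda>x p. 0 :: 'k)"
    by (rule ext) (simp add: inner_der_def pmult_zero_left pmult_zero_right)
  then show ?thesis using is_der_inner_der[OF pathalg_zero] by simp
qed

lemma is_der_sum:
  assumes "finite F" "\<forall>i\<in>F. is_der V E src tgt I (Df i)"
  shows "is_der V E src tgt I (\<lambda>x p. \<Sum>i\<in>F. w i * Df i x p)"
  using assms
proof (induction F rule: finite_induct)
  case empty then show ?case using is_der_zero_op by simp
next
  case (insert i F)
  have "is_der V E src tgt I (\<lambda>x p. 1 * (\<Sum>i\<in>F. w i * Df i x p) + w i * Df i x p)"
    using insert by (intro is_der_lin) auto
  moreover have "(\<lambda>x p. 1 * (\<Sum>i\<in>F. w i * Df i x p) + w i * Df i x p) =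
     (\<lambda>x p. \<Sum>i\<in>insert i F. w i * Df i x p)"
    using insert by (simp add: add.commute)
  ultimately show ?case by simp
qed

end

section \<open>Connected quivers\<close>

lemma rtrancl_crosses_boundary:
  assumes "u \<in> A" "w \<notin> A" "(u, w) \<in> (\<Union>a\<in>E. {(src a, tgt a), (tgt a, src a)})\<^sup>*"
  shows "\<exists>a\<in>E. (src a \<in> A \<and> tgt a \<notin> A) \<or> (tgt a \<in> A \<and> src a \<notin> A)"
proof -
  have "y \<in> A \<or> (\<exists>a\<in>E. (src a \<in> A \<and> tgt a \<notin> A) \<or> (tgt a \<in> A \<and> src a \<notin> A))"
    if "(u, y) \<in> (\<Union>a\<in>E. {(src a, tgt a), (tgt a, src a)})\<^sup>*" for y
    using that
  proof (induction rule: rtrancl_induct)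
    case base then show ?case using assms by simp
  next
    case (step y z)
    then obtain a where "a \<in> E" "(y, z) = (src a, tgt a) \<or> (y, z) = (tgt a, src a)" by auto
    then show ?case using step.IH by blast
  qed
  then show ?thesis using assms by blast
qed

text \<open>\<open>tree_enum k\<close> lists \<open>k\<close> distinct vertices \<open>vs 0, \<dots>, vs (k - 1)\<close> such that each
  \<open>vs i\<close> with \<open>i \<ge> 1\<close> is joined by the arrow \<open>bs i\<close> to an earlier vertex; the arrows
  \<open>bs 1, \<dots>, bs (k - 1)\<close> then form a spanning tree of the listed vertices.\<close>

definition tree_enum :: "nat \<Rightarrow> 'v set \<Rightarrow> 'e set \<Rightarrow> ('e \<Rightarrow> 'v) \<Rightarrow> ('e \<Rightarrow> 'v)
    \<Rightarrow> (nat \<Rightarrow> 'v) \<Rightarrow> (nat \<Rightarrow> 'e) \<Rightarrow> bool" where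
  "tree_enum k V E src tgt vs bs \<longleftrightarrow> vs ` {..<k} \<subseteq> V \<and> inj_on vs {..<k} \<and>
     (\<forall>i\<in>{1..<k}. bs i \<in> E \<and> (\<exists>j<i. (src (bs i) = vs i \<and> tgt (bs i) = vs j) \<or>
        (src (bs i) = vs j \<and> tgt (bs i) = vs i)))"

lemma tree_enumD:
  assumes "tree_enum k V E src tgt vs bs"
  shows "vs ` {..<k} \<subseteq> V" "inj_on vs {..<k}"
    "\<forall>i\<in>{1..<k}. bs i \<in> E \<and> (\<exists>j<i. (src (bs i) = vs i \<and> tgt (bs i) = vs j) \<or>
        (src (bs i) = vs j \<and> tgt (bs i) = vs i))"
  using assms unfolding tree_enum_def by blast+

lemma tree_enum_extend:
  assumes conn: "quiver_connected V E src tgt" and ends: "\<forall>a\<in>E. src a \<in> V \<and> tgt a \<in> V"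
    and enum: "tree_enum k V E src tgt vs bs" and k: "1 \<le> k" "k < card V"
  shows "\<exists>vs' bs'. tree_enum (Suc k) V E src tgt vs' bs'"
proof -
  note IH = tree_enumD[OF enum]
  let ?A = "vs ` {..<k}"
  have "card ?A = k" using IH(2) by (simp add: card_image)
  then have "?A \<noteq> V" using k by auto
  then obtain w where w: "w \<in> V" "w \<notin> ?A" using IH(1) by blast
  have u: "vs 0 \<in> ?A" "vs 0 \<in> V" using k IH(1) by auto
  have "(vs 0, w) \<in> (\<Union>a\<in>E. {(src a, tgt a), (tgt a, src a)})\<^sup>*"
    using conn u(2) w(1) by (simp add: quiver_connected_def)
  from rtrancl_crosses_boundary[OF u(1) w(2) this]
  obtain a where a: "a \<in> E" "(src a \<in> ?A \<and> tgt a \<notin> ?A) \<or> (tgt a \<in> ?A \<and> src a \<notin> ?A)"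
    by blast
  define x where "x = (if src a \<in> ?A then tgt a else src a)"
  define y where "y = (if src a \<in> ?A then src a else tgt a)"
  have x: "x \<in> V" "x \<notin> ?A" using a ends by (auto simp: x_def)
  have "y \<in> ?A" using a by (auto simp: y_def)
  then obtain j where j: "j < k" "y = vs j" by auto
  have xy: "(src a = x \<and> tgt a = y) \<or> (src a = y \<and> tgt a = x)" by (auto simp: x_def y_def)
  let ?vs = "vs(k := x)" and ?bs = "bs(k := a)"
  have "tree_enum (Suc k) V E src tgt ?vs ?bs"
    unfolding tree_enum_def
  proof (intro conjI)
    show "?vs ` {..<Suc k} \<subseteq> V" using IH(1) x by (auto simp: lessThan_Suc)
    show "inj_on ?vs {..<Suc k}" using IH(2) x(2) by (auto simp: inj_on_def lessThan_Suc)
    show "\<forall>i\<in>{1..<Suc k}. ?bs i \<in> E \<and> (\<exists>j<i. (src (?bs i) = ?vs i \<and> tgt (?bs i) = ?vs j) \<or>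
        (src (?bs i) = ?vs j \<and> tgt (?bs i) = ?vs i))"
    proof
      fix i assume i: "i \<in> {1..<Suc k}"
      show "?bs i \<in> E \<and> (\<exists>j<i. (src (?bs i) = ?vs i \<and> tgt (?bs i) = ?vs j) \<or>
        (src (?bs i) = ?vs j \<and> tgt (?bs i) = ?vs i))"
      proof (cases "i = k")
        case True
        then show ?thesis using a(1) j xy by (intro conjI, simp, intro exI[of _ j]) auto
      next
        case False
        then have ik: "i \<in> {1..<k}" using i by auto
        then obtain j' where "j' < i" "(src (bs i) = vs i \<and> tgt (bs i) = vs j') \<or>
          (src (bs i) = vs j' \<and> tgt (bs i) = vs i)" "bs i \<in> E" using IH(3) by blast
        then show ?thesis using False ik by (intro conjI, simp, intro exI[of _ j']) auto
      qed
    qed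
  qed
  then show ?thesis by blast
qed

lemma tree_enum_exists:
  assumes finV: "finite V" and conn: "quiver_connected V E src tgt"
    and ends: "\<forall>a\<in>E. src a \<in> V \<and> tgt a \<in> V"
  shows "\<exists>vs bs. tree_enum (card V) V E src tgt vs bs"
proof -
  have ne: "V \<noteq> {}" using conn by (simp add: quiver_connected_def)
  have "\<exists>vs bs. tree_enum k V E src tgt vs bs" if "1 \<le> k" "k \<le> card V" for k
    using that
  proof (induction k)
    case (Suc k)
    show ?case
    proof (cases "k = 0")
      case True
      obtain v0 where "v0 \<in> V" using ne by blast
      then have "tree_enum (Suc k) V E src tgt (\<lambda>_. v0) bs" for bs
        using True by (auto simp: tree_enum_def lessThan_Suc)
      then show ?thesis by blast
    next
      case False
      then show ?thesis using Suc tree_enum_extend[OF conn ends] by fastforce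
    qed
  qed simp
  moreover have "1 \<le> card V" using ne finV by (simp add: Suc_leI card_gt_0_iff)
  ultimately show ?thesis by blast
qed

lemma tree_enum_image:
  assumes "finite V" "tree_enum (card V) V E src tgt vs bs"
  shows "vs ` {..<card V} = V"
proof -
  note enum = tree_enumD[OF assms(2)]
  have "card (vs ` {..<card V}) = card V" using enum(2) by (simp add: card_image)
  then show ?thesis using enum(1) assms(1) by (simp add: card_subset_eq)
qed

lemma tree_enum_arrows_inj:
  assumes "tree_enum k V E src tgt vs bs"
  shows "inj_on bs {1..<k}"
proof -
  note ord = tree_enumD[OF assms]
  have bs_ne: "bs i \<noteq> bs i'" if H: "i \<in> {1..<k}" "i' \<in> {1..<k}" "i < i'" for i i'
  proof
    assume eq: "bs i = bs i'"
    obtain j where j: "j < i"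
      "(src (bs i) = vs i \<and> tgt (bs i) = vs j) \<or> (src (bs i) = vs j \<and> tgt (bs i) = vs i)"
      using ord(3) H(1) by blast
    obtain j' where j': "j' < i'"
      "(src (bs i') = vs i' \<and> tgt (bs i') = vs j') \<or> (src (bs i') = vs j' \<and> tgt (bs i') = vs i')"
      using ord(3) H(2) by blast
    have lt: "i < k" "j < k" "i' < k" using H j by auto
    have "vs i' \<noteq> vs i" using inj_onD[OF ord(2), of i' i] lt H(3) by auto
    moreover have "vs i' \<noteq> vs j" using inj_onD[OF ord(2), of i' j] lt H(3) j(1) by auto
    moreover have "src (bs i) = vs i' \<or> tgt (bs i) = vs i'" using eq j'(2) by auto
    ultimately show False using j(2) by auto
  qed
  show ?thesis
    by (rule inj_onI) (metis bs_ne linorder_neqE_nat)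
qed

lemma tree_enum_constant:
  assumes fin: "finite V" and enum: "tree_enum (card V) V E src tgt vs bs"
    and tree: "\<forall>i\<in>{1..<card V}. f (src (bs i)) = f (tgt (bs i))" and v: "v \<in> V"
  shows "f v = f (vs 0)"
proof -
  note ord = tree_enumD[OF enum]
  have "f (vs i) = f (vs 0)" if "i < card V" for i
    using that
  proof (induction i rule: less_induct)
    case (less i)
    show ?case
    proof (cases "i = 0")
      case False
      then have i: "i \<in> {1..<card V}" using less.prems by auto
      then obtain j where j: "j < i"
        "(src (bs i) = vs i \<and> tgt (bs i) = vs j) \<or> (src (bs i) = vs j \<and> tgt (bs i) = vs i)"
        using ord(3) by blast
      have "f (src (bs i)) = f (tgt (bs i))" using tree i by blast
      then have "f (vs i) = f (vs j)" using j(2) by auto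
      also have "\<dots> = f (vs 0)" using less.IH[OF j(1)] j(1) less.prems by simp
      finally show ?thesis .
    qed simp
  qed
  then show ?thesis using v tree_enum_image[OF fin enum] by (metis imageE lessThan_iff)
qed

section \<open>Acyclic quotients\<close>

locale acyclic_quotient = path_ideal V E src tgt I
  for V :: "'v set" and E :: "'e set" and src tgt :: "'e \<Rightarrow> 'v"
    and I :: "(('v,'e) qpath \<Rightarrow> 'k::field) set" +
  fixes Q :: "('v,'e) qpath set"
  assumes finV: "finite V" and finE: "finite E"
    and ends: "\<forall>a\<in>E. src a \<in> V \<and> tgt a \<in> V"
    and conn: "quiver_connected V E src tgt"
    and ideal_sq: "I \<subseteq> arrow_ideal_sq V E src tgt"
    and basis: "path_basis_mod V E src tgt I Q"
    and acyclic: "\<forall>q\<in>Q. pstart q = pend tgt q \<longrightarrow> (\<exists>v\<in>V. (\<lambda>p. delta q p - vtx v p) \<in> I)"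
begin

definition Q_comb :: "(('v,'e) qpath \<Rightarrow> 'k) \<Rightarrow> bool" where
  "Q_comb g \<longleftrightarrow> finite {p. g p \<noteq> 0} \<and> {p. g p \<noteq> 0} \<subseteq> Q"

lemma ideal_vanish_short: "x \<in> I \<Longrightarrow> x (v, []) = 0 \<and> x (v, [a]) = 0"
proof -
  assume "x \<in> I"
  then have "x \<in> pathalg_ge2 V E src tgt" using ideal_sq arrow_ideal_sq_subset_ge2[OF ends] by blast
  then show ?thesis unfolding pathalg_ge2_def by blast
qed

lemma Q_valid: "q \<in> Q \<Longrightarrow> pvalid V E src tgt q"
  using basis unfolding path_basis_mod_def by (elim conjE) blast

lemma basis_indep: "\<forall>F c. finite F \<and> F \<subseteq> Q \<and> (\<lambda>p. \<Sum>q\<in>F. c q * (delta q p :: 'k)) \<in> I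
    \<longrightarrow> (\<forall>q\<in>F. c q = 0)"
  using basis unfolding path_basis_mod_def by (elim conjE) assumption

lemma basis_span: "\<forall>x\<in>PA. \<exists>F c. finite F \<and> F \<subseteq> Q \<and>
        (\<lambda>p. x p - (\<Sum>q\<in>F. c q * (delta q p :: 'k))) \<in> I"
  using basis unfolding path_basis_mod_def by (elim conjE) assumption

lemma Q_comb_ideal_zero: assumes "Q_comb g" "g \<in> I" shows "g p = 0"
proof -
  let ?F = "{p. g p \<noteq> 0}"
  have f: "finite ?F" and "?F \<subseteq> Q" using assms(1) by (simp_all add: Q_comb_def)
  moreover have "(\<lambda>p. \<Sum>q\<in>?F. g q * delta q p) \<in> I"
    using delta_expansion[OF f] assms(2) by simp
  ultimately have "\<forall>q\<in>?F. g q = 0" using basis_indep by blast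
  then show ?thesis by blast
qed

lemma Q_comb_span:
  assumes "x \<in> PA"
  shows "\<exists>g. Q_comb g \<and> (\<lambda>p. x p - g p) \<in> I"
proof -
  obtain F c where F: "finite F" "F \<subseteq> Q" "(\<lambda>p. x p - (\<Sum>q\<in>F. c q * delta q p)) \<in> I"
    using basis_span assms by blast
  let ?g = "\<lambda>p. \<Sum>q\<in>F. c q * delta q p"
  have "{p. ?g p \<noteq> 0} \<subseteq> F" by (auto simp: sum_smult_delta[OF F(1)] split: if_splits)
  then have "Q_comb ?g" using F by (auto simp: Q_comb_def intro: finite_subset)
  then show ?thesis using F by blast
qed

lemma Q_comb_lin: "Q_comb g \<Longrightarrow> Q_comb h \<Longrightarrow> Q_comb (\<lambda>p. a * g p + b * h p)"
proof -
  assume g: "Q_comb g" and h: "Q_comb h"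
  have s: "{p. a * g p + b * h p \<noteq> 0} \<subseteq> {p. g p \<noteq> 0} \<union> {p. h p \<noteq> 0}" by auto
  have "finite ({p. g p \<noteq> 0} \<union> {p. h p \<noteq> 0})" using g h by (simp add: Q_comb_def)
  from finite_subset[OF s this] have "finite {p. a * g p + b * h p \<noteq> 0}" .
  moreover have "{p. g p \<noteq> 0} \<union> {p. h p \<noteq> 0} \<subseteq> Q" using g h by (simp add: Q_comb_def)
  ultimately show ?thesis unfolding Q_comb_def using order_trans[OF s] by blast
qed

lemma Q_comb_diff: "Q_comb g \<Longrightarrow> Q_comb h \<Longrightarrow> Q_comb (\<lambda>p. g p - h p)"
  using Q_comb_lin[of g h 1 "-1"] by simp

lemma Q_comb_mult: "Q_comb g \<Longrightarrow> Q_comb (\<lambda>p. c p * g p)"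
proof -
  assume g: "Q_comb g"
  have s: "{p. c p * g p \<noteq> 0} \<subseteq> {p. g p \<noteq> 0}" by auto
  have "finite {p. g p \<noteq> 0}" using g by (simp add: Q_comb_def)
  from finite_subset[OF s this] have "finite {p. c p * g p \<noteq> 0}" .
  moreover have "{p. g p \<noteq> 0} \<subseteq> Q" using g by (simp add: Q_comb_def)
  ultimately show ?thesis unfolding Q_comb_def using order_trans[OF s] by blast
qed

lemma Q_comb_delta: "q \<in> Q \<Longrightarrow> Q_comb (delta q)"
proof -
  assume "q \<in> Q"
  moreover have "{p. delta q p \<noteq> (0::'k)} = {q}" by (auto simp: delta_def)
  ultimately show ?thesis by (simp add: Q_comb_def)
qed

lemma arrow_in_Q: assumes "a \<in> E" shows "(src a, [a]) \<in> Q"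
proof -
  have "delta (src a, [a]) \<in> PA" using assms ends by (intro delta_pathalg) (auto simp: pvalid_def)
  then obtain g where g: "Q_comb g" "(\<lambda>p. delta (src a, [a]) p - g p) \<in> I"
    using Q_comb_span by blast
  from ideal_vanish_short[OF g(2), of "src a" a] have "g (src a, [a]) = 1" by (simp add: delta_def)
  then show ?thesis using g(1) by (auto simp: Q_comb_def)
qed

lemma Q_cycle_trivial: assumes "q \<in> Q" "pstart q = pend tgt q" shows "q = (fst q, [])"
proof -
  obtain v where v: "v \<in> V" "(\<lambda>p. delta q p - vtx v p) \<in> I" using acyclic assms by blast
  obtain u zs where uq: "q = (u, zs)" by (cases q)
  show ?thesis
  proof (rule ccontr)
    assume "q \<noteq> (fst q, [])"
    then have "zs \<noteq> []" using uq by simp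
    from ideal_vanish_short[OF v(2)] have "delta q (v, []) - vtx v (v, []::'e list) = (0::'k)"
        by blast
    moreover have "delta q (v, []::'e list) = (0::'k)" using uq \<open>zs \<noteq> []\<close> by (simp add: delta_def)
    moreover have "vtx v (v, []::'e list) = (1::'k)" by (simp add: delta_def vtx_def)
    ultimately show False by simp
  qed
qed

text \<open>Sandwiched between \<open>e\<^sub>w\<close>, a cycle at \<open>w\<close> is congruent to a combination of
  basis paths from \<open>w\<close> to \<open>w\<close>, which by acyclicity is a multiple of \<open>e\<^sub>w\<close>; the
  multiple is \<open>0\<close> because elements of \<open>I\<close> have no vertex coefficients.\<close>

lemma cycle_in_ideal:
  assumes val: "pvalid_aux V E src tgt w cs" and cyc: "pend_aux tgt w cs = w" and ne: "cs \<noteq> []"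
  shows "delta (w, cs) \<in> I"
proof -
  have wV: "w \<in> V" using val by (rule pvalid_aux_start)
  have dPA: "delta (w, cs) \<in> PA" using val by (simp add: delta_pathalg pvalid_def)
  obtain g where g: "Q_comb g" "(\<lambda>p. delta (w, cs) p - g p) \<in> I" using Q_comb_span[OF dPA] by blast
  let ?ew = "delta (w, []) :: ('v,'e) qpath \<Rightarrow> 'k"
  have h: "(\<lambda>p. pmult tgt (pmult tgt ?ew (delta (w, cs))) ?ew p
      - pmult tgt (pmult tgt ?ew g) ?ew p) \<in> I"
    by (rule ideal_cong_mult_right[OF vtx_pathalg[OF wV]], rule ideal_cong_mult_left[OF vtx_pathalg[OF wV]], rule g(2))
  have e1: "pmult tgt (pmult tgt ?ew (delta (w, cs))) ?ew = delta (w, cs)"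
    unfolding pmult_vtx_sandwich by (rule ext) (auto simp: delta_def pend_def cyc)
  define g' where "g' = (\<lambda>p. if fst p = w \<and> pend tgt p = w then g p else 0)"
  have e2: "pmult tgt (pmult tgt ?ew g) ?ew = g'" unfolding pmult_vtx_sandwich g'_def ..
  have Qg': "Q_comb g'"
  proof -
    have "Q_comb (\<lambda>p. (if fst p = w \<and> pend tgt p = w then 1 else 0) * g p)"
        by (rule Q_comb_mult[OF g(1)])
    moreover have "(\<lambda>p. (if fst p = w \<and> pend tgt p = w then 1 else 0) * g p) = g'"
      by (rule ext) (simp add: g'_def)
    ultimately show ?thesis by simp
  qed
  have g'0: "g' p = 0" if "p \<noteq> (w, [])" for p
  proof (rule ccontr)
    assume nz: "g' p \<noteq> 0"
    then have "p \<in> Q" using Qg' by (auto simp: Q_comb_def)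
    moreover have "fst p = w" "pend tgt p = w" using nz by (auto simp: g'_def split: if_splits)
    ultimately have "p = (fst p, [])" by (intro Q_cycle_trivial) (simp_all add: pstart_def)
    then show False using that \<open>fst p = w\<close> by simp
  qed
  have h2: "(\<lambda>p. delta (w, cs) p - g' p) \<in> I" using h unfolding e1 e2 .
  from ideal_vanish_short[OF h2] have "delta (w, cs) (w, []) - g' (w, []) = 0" by blast
  then have "g' (w, []) = 0" using ne by (simp add: delta_def)
  then have "g' = (\<lambda>_. 0)" using g'0 by (metis ext)
  then show ?thesis using h2 by simp
qed

lemma long_path_in_ideal:
  assumes val: "pvalid_aux V E src tgt v zs" and len: "card V \<le> length zs"
  shows "delta (v, zs) \<in> I"
proof -
  obtain as cs bs where zs: "zs = as @ cs @ bs" and ne: "cs \<noteq> []"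
    and pc: "pend_aux tgt (pend_aux tgt v as) cs = pend_aux tgt v as"
    using long_path_has_cycle[OF finV val len] by blast
  define w where "w = pend_aux tgt v as"
  have "pvalid_aux V E src tgt v (as @ cs @ bs)" using val zs by simp
  then have vi: "pvalid_aux V E src tgt v as" and vc: "pvalid_aux V E src tgt w cs"
    and vj: "pvalid_aux V E src tgt w bs"
    using pc by (simp_all add: pvalid_aux_append w_def)
  have cI: "delta (w, cs) \<in> I" using cycle_in_ideal[OF vc _ ne] pc by (simp add: w_def)
  have "pmult tgt (pmult tgt (delta (v, as)) (delta (w, cs))) (delta (w, bs)) =
     (delta (v, zs) :: ('v,'e) qpath \<Rightarrow> 'k)"
    using pc zs by (simp add: pmult_delta pend_aux_append w_def)
  moreover have "pmult tgt (pmult tgt (delta (v, as)) (delta (w, cs))) (delta (w, bs)) \<in> I"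
    by (rule ideal_mult_right[OF _ ideal_mult_left[OF _ cI]])
      (simp_all add: delta_pathalg pvalid_def vi vj)
  ultimately show ?thesis by simp
qed

lemma Q_length_less_card: assumes "q \<in> Q" shows "length (snd q) < card V"
proof (rule ccontr)
  assume "\<not> length (snd q) < card V"
  then have "delta q \<in> I"
    using long_path_in_ideal[of "fst q" "snd q"] Q_valid[OF assms] by (simp add: pvalid_def)
  then have "delta q q = (0::'k)" using Q_comb_ideal_zero Q_comb_delta[OF assms] by blast
  then show False by (simp add: delta_def)
qed

lemma finite_Q: "finite Q"
proof -
  have "Q \<subseteq> V \<times> {xs. set xs \<subseteq> E \<and> length xs \<le> card V}"
  proof
    fix q assume q: "q \<in> Q"
    obtain v zs where vz: "q = (v, zs)" by (cases q)
    have "pvalid_aux V E src tgt v zs" using Q_valid[OF q] vz by (simp add: pvalid_def)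
    then have "v \<in> V" "set zs \<subseteq> E" by (auto dest: pvalid_aux_start pvalid_aux_set)
    moreover have "length zs \<le> card V" using Q_length_less_card[OF q] vz by simp
    ultimately show "q \<in> V \<times> {xs. set xs \<subseteq> E \<and> length xs \<le> card V}" using vz by simp
  qed
  moreover have "finite (V \<times> {xs. set xs \<subseteq> E \<and> length xs \<le> card V})"
    using finV finE by (simp add: finite_lists_length_le)
  ultimately show ?thesis by (rule finite_subset)
qed

lemma B2_D:
  assumes "(r, q) \<in> B2 E src tgt Q"
  shows "r \<in> E" "q \<in> Q" "fst q = src r" "pend_aux tgt (src r) (snd q) = tgt r"
    "pvalid_aux V E src tgt (src r) (snd q)"
proof -
  show r: "r \<in> E" and q: "q \<in> Q" using assms by (auto simp: B2_def)
  show f: "fst q = src r" using assms by (auto simp: B2_def pstart_def)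
  show "pend_aux tgt (src r) (snd q) = tgt r" using assms f by (auto simp: B2_def pend_def)
  show "pvalid_aux V E src tgt (src r) (snd q)" using Q_valid[OF q] f by (simp add: pvalid_def)
qed

lemma basic_der_diff_op:
  assumes rq: "(r, q) \<in> B2 E src tgt Q"
  shows "is_diff_op V E src tgt I (basic_der V E src tgt r q)"
proof -
  note bp = B2_D[OF rq]
  note PAl = lin_ext_subst_arrow_pathalg[OF bp(5) bp(4)]
  note Hl = lin_ext_subst_arrow_leibniz[OF bp(5) bp(4)]
  show ?thesis
    unfolding is_diff_op_iff_is_der is_der_def
  proof (intro conjI ballI allI impI)
    fix x :: "('v,'e) qpath \<Rightarrow> 'k" assume "x \<notin> PA"
    then show "basic_der V E src tgt r q x = (\<lambda>_. 0)" by (simp add: basic_der_def)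
  next
    fix x :: "('v,'e) qpath \<Rightarrow> 'k" assume "x \<in> PA"
    then show "basic_der V E src tgt r q x \<in> PA" by (simp add: basic_der_def PAl)
  next
    fix x y :: "('v,'e) qpath \<Rightarrow> 'k" and a b :: 'k assume x: "x \<in> PA" and y: "y \<in> PA"
    have xy: "(\<lambda>q. a * x q + b * y q) \<in> PA" by (rule pathalg_lin[OF x y])
    have fx: "finite {p. x p \<noteq> 0}" and fy: "finite {p. y p \<noteq> 0}" using x y
        by (auto simp: pathalg_def)
    have "(\<lambda>p. basic_der V E src tgt r q (\<lambda>q. a * x q + b * y q) p -
        (a * basic_der V E src tgt r q x p + b * basic_der V E src tgt r q y p)) = (\<lambda>_. 0)"
      using x y xy by (simp add: basic_der_def lin_ext_lin[OF fx fy])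
    then show "(\<lambda>p. basic_der V E src tgt r q (\<lambda>q. a * x q + b * y q) p -
        (a * basic_der V E src tgt r q x p + b * basic_der V E src tgt r q y p)) \<in> I"
      by (simp add: ideal_zero)
  next
    fix x y :: "('v,'e) qpath \<Rightarrow> 'k" assume x: "x \<in> PA" and y: "y \<in> PA"
    have xy: "pmult tgt x y \<in> PA" by (rule pmult_pathalg[OF x y])
    have fx: "finite {p. x p \<noteq> 0}" and fy: "finite {p. y p \<noteq> 0}" using x y
        by (auto simp: pathalg_def)
    have H: "\<forall>a\<in>{p. x p \<noteq> 0}. \<forall>b\<in>{p. y p \<noteq> 0}. lin_ext (subst_arrow r (snd q)) (pmult tgt (delta a) (delta b)) =
      (\<lambda>p. pmult tgt (subst_arrow r (snd q) a) (delta b) p + pmult tgt (delta a) (subst_arrow r (snd q) b) p :: 'k)"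
      using x y by (auto simp: pathalg_def intro!: Hl)
    have "(\<lambda>p. basic_der V E src tgt r q (pmult tgt x y) p
        - (pmult tgt (basic_der V E src tgt r q x) y p +
        pmult tgt x (basic_der V E src tgt r q y) p)) = (\<lambda>_. 0)"
      using x y xy by (simp add: basic_der_def lin_ext_leibniz[OF fx fy H])
    then show "(\<lambda>p. basic_der V E src tgt r q (pmult tgt x y) p
        - (pmult tgt (basic_der V E src tgt r q x) y p +
        pmult tgt x (basic_der V E src tgt r q y) p)) \<in> I"
      by (simp add: ideal_zero)
  qed
qed

lemma basic_der_vtx:
  assumes "v \<in> V"
  shows "basic_der V E src tgt r q (delta (v, [])) = (\<lambda>_. 0::'k)"
  using vtx_pathalg[OF assms] by (simp add: basic_der_def lin_ext_delta subst_arrow_def)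

lemma basic_der_arr:
  assumes rq: "(r, q) \<in> B2 E src tgt Q" and a: "a \<in> E"
  shows "basic_der V E src tgt r q (delta (src a, [a])) = (if a = r then delta q else (\<lambda>_. 0::'k))"
proof -
  note bp = B2_D[OF rq]
  have "delta (src a, [a]) \<in> (PA :: (('v,'e) qpath \<Rightarrow> 'k) set)"
    using a ends by (intro delta_pathalg) (auto simp: pvalid_def)
  then have "basic_der V E src tgt r q (delta (src a, [a]))
      = (subst_arrow r (snd q) (src a, [a]) :: _ \<Rightarrow> 'k)"
    by (simp add: basic_der_def lin_ext_delta)
  moreover have "{i. i < length [a] \<and> [a] ! i = r} = (if a = r then {0} else {})" by auto
  ultimately show ?thesis using bp(3)
    by (cases q) (auto simp: subst_arrow_def replace_at_def)
qed

abbreviation bder :: "'e \<times> ('v,'e) qpath \<Rightarrow> (('v,'e) qpath \<Rightarrow> 'k) \<Rightarrow> (('v,'e) qpath \<Rightarrow> 'k)" where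
  "bder s \<equiv> basic_der V E src tgt (fst s) (snd s)"

definition bder_comb :: "('e \<times> ('v,'e) qpath) set \<Rightarrow> ('e \<times> ('v,'e) qpath \<Rightarrow> 'k) \<Rightarrow>
    (('v,'e) qpath \<Rightarrow> 'k) \<Rightarrow> (('v,'e) qpath \<Rightarrow> 'k)" where
  "bder_comb Sp c = (\<lambda>x p. \<Sum>s\<in>Sp. c s * bder s x p)"

definition spanned :: "('e \<times> ('v,'e) qpath) set \<Rightarrow> ((('v,'e) qpath \<Rightarrow> 'k) \<Rightarrow> (('v,'e) qpath \<Rightarrow> 'k))
    \<Rightarrow> bool" where
  "spanned Sp D \<longleftrightarrow> (\<exists>c m. m \<in> PA \<and>
     (\<forall>x\<in>PA. (\<lambda>p. D x p - bder_comb Sp c x p - inner_der tgt m x p) \<in> I))"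

lemma spanned_lin:
  assumes "spanned Sp D1" "spanned Sp D2"
  shows "spanned Sp (\<lambda>x p. a * D1 x p + b * D2 x p)"
proof -
  obtain c1 m1 where 1: "m1 \<in> PA"
      "\<forall>x\<in>PA. (\<lambda>p. D1 x p - bder_comb Sp c1 x p - inner_der tgt m1 x p) \<in> I"
    using assms(1) by (auto simp: spanned_def)
  obtain c2 m2 where 2: "m2 \<in> PA"
      "\<forall>x\<in>PA. (\<lambda>p. D2 x p - bder_comb Sp c2 x p - inner_der tgt m2 x p) \<in> I"
    using assms(2) by (auto simp: spanned_def)
  show ?thesis unfolding spanned_def
  proof (intro exI conjI ballI)
    show "(\<lambda>p. a * m1 p + b * m2 p) \<in> PA" by (rule pathalg_lin[OF 1(1) 2(1)])
  next
    fix x :: "('v,'e) qpath \<Rightarrow> 'k" assume x: "x \<in> PA"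
    have "(\<lambda>p. a * (D1 x p - bder_comb Sp c1 x p - inner_der tgt m1 x p)
        + b * (D2 x p - bder_comb Sp c2 x p - inner_der tgt m2 x p)) \<in> I"
      using 1(2) 2(2) x by (intro ideal_lin) auto
    moreover have "(\<lambda>p. a * (D1 x p - bder_comb Sp c1 x p - inner_der tgt m1 x p)
        + b * (D2 x p - bder_comb Sp c2 x p - inner_der tgt m2 x p)) =
      (\<lambda>p. (a * D1 x p + b * D2 x p) - bder_comb Sp (\<lambda>s. a * c1 s + b * c2 s) x p - inner_der tgt (\<lambda>p. a * m1 p + b * m2 p) x p)"
      by (rule ext) (simp add: bder_comb_def inner_der_lin sum.distrib sum_distrib_left algebra_simps)
    ultimately show "(\<lambda>p. (a * D1 x p + b * D2 x p) - bder_comb Sp (\<lambda>s. a * c1 s + b * c2 s) x p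
        - inner_der tgt (\<lambda>p. a * m1 p + b * m2 p) x p) \<in> I"
      by simp
  qed
qed

lemma spanned_inner_der: "m \<in> PA \<Longrightarrow> spanned Sp (inner_der tgt m)"
  unfolding spanned_def by (intro exI[of _ "\<lambda>_. 0"] exI[of _ m]) (simp add: bder_comb_def ideal_zero)

lemma spanned_bder: "finite Sp \<Longrightarrow> s \<in> Sp \<Longrightarrow> spanned Sp (bder s)"
proof -
  assume f: "finite Sp" and s: "s \<in> Sp"
  have e: "(\<Sum>t\<in>Sp. (if t = s then 1 else 0) * bder t x p) = bder s x p" for x p
  proof -
    have "(\<Sum>t\<in>Sp. (if t = s then 1 else 0) * bder t x p) = (\<Sum>t\<in>Sp. if t = s then bder t x p else 0)"
      by (rule sum.cong) auto
    then show ?thesis using f s by simp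
  qed
  have "bder_comb Sp (\<lambda>t. if t = s then 1 else 0) = bder s"
    unfolding bder_comb_def by (intro ext) (rule e)
  then show ?thesis unfolding spanned_def
    by (intro exI[of _ "\<lambda>t. if t = s then 1 else 0"] exI[of _ "\<lambda>_. 0"])
       (simp add: pathalg_zero inner_der_def pmult_zero_left pmult_zero_right ideal_zero)
qed

lemma spanned_cong:
  assumes "spanned Sp D" "\<forall>x\<in>PA. (\<lambda>p. D x p - D' x p) \<in> I"
  shows "spanned Sp D'"
proof -
  obtain c m where 1: "m \<in> PA" "\<forall>x\<in>PA. (\<lambda>p. D x p - bder_comb Sp c x p - inner_der tgt m x p) \<in> I"
    using assms(1) by (auto simp: spanned_def)
  show ?thesis unfolding spanned_def
  proof (intro exI conjI ballI)
    show "m \<in> PA" by (rule 1(1))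
  next
    fix x :: "('v,'e) qpath \<Rightarrow> 'k" assume x: "x \<in> PA"
    have "(\<lambda>p. (D x p - bder_comb Sp c x p - inner_der tgt m x p) - (D x p - D' x p)) \<in> I"
      using ideal_diff[of "\<lambda>p. D x p - bder_comb Sp c x p - inner_der tgt m x p"
          "\<lambda>p. D x p - D' x p"] 1(2) assms(2) x
      by simp
    then show "(\<lambda>p. D' x p - bder_comb Sp c x p - inner_der tgt m x p) \<in> I"
        by (simp add: algebra_simps)
  qed
qed

lemma spanned_ext: "spanned Sp D \<Longrightarrow> (\<forall>x\<in>PA. D x = D' x) \<Longrightarrow> spanned Sp D'"
  by (erule spanned_cong) (simp add: ideal_zero)

lemma spanned_zero: "spanned Sp (\<lambda>x p. 0)"
proof -
  have "spanned Sp (inner_der tgt (\<lambda>_. 0))" by (rule spanned_inner_der[OF pathalg_zero])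
  moreover have "inner_der tgt (\<lambda>_. 0) = (\<lambda>x p. 0 :: 'k)"
    by (rule ext) (simp add: inner_der_def pmult_zero_left pmult_zero_right)
  ultimately show ?thesis by simp
qed

lemma spanned_sum:
  assumes "finite F" "\<forall>i\<in>F. spanned Sp (Df i)"
  shows "spanned Sp (\<lambda>x p. \<Sum>i\<in>F. w i * Df i x p)"
  using assms
proof (induction F rule: finite_induct)
  case empty then show ?case using spanned_zero by simp
next
  case (insert i F)
  have "spanned Sp (\<lambda>x p. 1 * (\<Sum>i\<in>F. w i * Df i x p) + w i * Df i x p)"
    using insert by (intro spanned_lin) auto
  moreover have "(\<lambda>x p. 1 * (\<Sum>i\<in>F. w i * Df i x p) + w i * Df i x p) =
     (\<lambda>x p. \<Sum>i\<in>insert i F. w i * Df i x p)"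
    using insert by (simp add: add.commute)
  ultimately show ?case by simp
qed

lemma finite_B2: "finite (B2 E src tgt Q)"
proof -
  have "B2 E src tgt Q \<subseteq> E \<times> Q" by (auto simp: B2_def)
  then show ?thesis using finE finite_Q by (meson finite_SigmaI finite_subset)
qed

lemma arr_pathalg: "a \<in> E \<Longrightarrow> delta (src a, [a]) \<in> PA"
  using ends by (intro delta_pathalg) (auto simp: pvalid_def)

lemma is_der_bder: "s \<in> B2 E src tgt Q \<Longrightarrow> is_der V E src tgt I (bder s)"
  using basic_der_diff_op[of "fst s" "snd s"] by (simp add: is_diff_op_iff_is_der)

text \<open>Pointwise, \<open>D e\<^sub>w - [m0, e\<^sub>w]\<close> is a combination of the Leibniz defects of
  \<open>e\<^sub>w e\<^sub>v = 0\<close> (\<open>v \<noteq> w\<close>) and of \<open>e\<^sub>w e\<^sub>w = e\<^sub>w\<close>, which lie in \<open>I\<close>.\<close>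

lemma der_minus_inner_vtx:
  assumes dmD: "is_der V E src tgt I D" and w: "w \<in> V"
    and m0: "m0 = (\<lambda>p. \<Sum>w\<in>V. pmult tgt (D (delta (w, []))) (delta (w, [])) p)"
  shows "(\<lambda>p. 1 * D (delta (w, [])) p + (-1) * inner_der tgt m0 (delta (w, [])) p) \<in> I"
proof -
  define d where "d w = D (delta (w, []))" for w
  let ?ew = "delta (w, []) :: ('v,'e) qpath \<Rightarrow> 'k"
  have dPA: "v \<in> V \<Longrightarrow> d v \<in> PA" for v unfolding d_def by (intro is_der_pathalg[OF dmD] vtx_pathalg)
  have dval: "d v (u, zs) \<noteq> 0 \<Longrightarrow> pend_aux tgt u zs \<in> V" if "v \<in> V" for v u zs
    using dPA[OF that] by (auto simp: pathalg_def pvalid_def intro: pvalid_aux_end)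
  have m0_pt: "m0 (u, zs) = (if pend_aux tgt u zs \<in> V then d (pend_aux tgt u zs) (u, zs) else 0)" for u zs
  proof -
    have "m0 (u, zs) = (\<Sum>v\<in>V. if pend_aux tgt u zs = v then d v (u, zs) else 0)"
      unfolding m0 d_def by (simp add: pmult_vtx_right)
    also have "\<dots> = (\<Sum>v\<in>V. if v = pend_aux tgt u zs then d (pend_aux tgt u zs) (u, zs) else 0)"
      by (rule sum.cong) auto
    finally show ?thesis using finV by simp
  qed
  define Xa where "Xa v = pmult tgt (\<lambda>p. pmult tgt (d w) (delta (v, [])) p
      + pmult tgt ?ew (d v) p) (delta (v, []))" for v
  have XaI: "Xa v \<in> I" if v: "v \<in> V - {w}" for v
    unfolding Xa_def d_def
    by (rule ideal_mult_right[OF vtx_pathalg is_der_vtx_orth[OF dmD _ w]]) (use v in auto)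
  have Xa_pt: "Xa v (u, zs) = (if pend_aux tgt u zs = v then d w (u, zs)
      + (if u = w then d v (u, zs) else 0) else 0)" for v u zs
    unfolding Xa_def by (simp add: pmult_vtx_right pmult_vtx_left)
  define Xb where "Xb = pmult tgt (pmult tgt ?ew (\<lambda>p. d w p
      - (pmult tgt (d w) ?ew p + pmult tgt ?ew (d w) p))) ?ew"
  have XbI: "Xb \<in> I"
    unfolding Xb_def d_def
    by (intro ideal_mult_right ideal_mult_left vtx_pathalg is_der_vtx_idem[OF dmD w] w)
  have Xb_pt: "Xb (u, zs) = (if u = w \<and> pend_aux tgt u zs = w then - d w (u, zs) else 0)" for u zs
    unfolding Xb_def by (simp add: pmult_vtx_sandwich_pt pmult_vtx_right pmult_vtx_left)
  have fin: "finite (V - {w})" using finV by simp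
  have XI: "(\<lambda>p. (\<Sum>v\<in>V - {w}. Xa v p) - Xb p) \<in> I"
    by (rule ideal_diff[OF ideal_sum'[OF fin] XbI]) (use XaI in blast)
  have eq: "(\<lambda>p. 1 * D ?ew p + (-1) * inner_der tgt m0 ?ew p) = (\<lambda>p. (\<Sum>v\<in>V - {w}. Xa v p) - Xb p)"
  proof (rule ext)
    fix p :: "('v,'e) qpath"
    obtain u zs where p: "p = (u, zs)" by (cases p)
    let ?P = "pend_aux tgt u zs"
    have s: "(\<Sum>v\<in>V - {w}. Xa v (u, zs)) =
       (if ?P \<in> V - {w} then d w (u, zs) + (if u = w then d ?P (u, zs) else 0) else 0)"
    proof -
      have "(\<Sum>v\<in>V - {w}. Xa v (u, zs)) =
        (\<Sum>v\<in>V - {w}. if v = ?P then d w (u, zs) + (if u = w then d ?P (u, zs) else 0) else 0)"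
        by (rule sum.cong) (auto simp: Xa_pt)
      then show ?thesis using fin by simp
    qed
    have dw: "d w (u, zs) \<noteq> 0 \<Longrightarrow> ?P \<in> V" using dval[OF w] .
    show "1 * D ?ew p + (-1) * inner_der tgt m0 ?ew p = (\<Sum>v\<in>V - {w}. Xa v p) - Xb p"
      unfolding p s Xb_pt inner_der_def
      using dw w by (auto simp: pmult_vtx_right pmult_vtx_left m0_pt d_def)
  qed
  show ?thesis using XI unfolding eq .
qed

lemma der_arrow_parallel:
  assumes dm1: "is_der V E src tgt I D1" and hv: "\<forall>v\<in>V. D1 (delta (v, [])) \<in> I" and a: "a \<in> E"
  shows "\<exists>f. Q_comb f \<and> (\<lambda>p. D1 (delta (src a, [a])) p - f p) \<in> I \<and>
     (\<forall>p. f p \<noteq> 0 \<longrightarrow> fst p = src a \<and> pend tgt p = tgt a)"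
proof -
  let ?ar = "delta (src a, [a]) :: ('v,'e) qpath \<Rightarrow> 'k"
  let ?es = "delta (src a, []) :: ('v,'e) qpath \<Rightarrow> 'k"
  let ?et = "delta (tgt a, []) :: ('v,'e) qpath \<Rightarrow> 'k"
  have sV: "src a \<in> V" and tV: "tgt a \<in> V" using ends a by auto
  have arPA: "?ar \<in> PA" by (rule arr_pathalg[OF a])
  have esPA: "?es \<in> PA" and etPA: "?et \<in> PA" using vtx_pathalg[OF sV] vtx_pathalg[OF tV] by auto
  have h1: "pmult tgt ?es ?ar = ?ar" by (simp add: pmult_delta)
  have h2: "pmult tgt ?ar ?et = ?ar" by (simp add: pmult_delta)
  have D1ar: "D1 ?ar \<in> PA" by (rule is_der_pathalg[OF dm1 arPA])
  have L1: "(\<lambda>p. D1 ?ar p - (pmult tgt (D1 ?es) ?ar p + pmult tgt ?es (D1 ?ar) p)) \<in> I"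
    using is_der_leibnizD[OF dm1 esPA arPA] unfolding h1 .
  have L1b: "pmult tgt (D1 ?es) ?ar \<in> I" using hv sV by (intro ideal_mult_right arPA) auto
  have c1: "(\<lambda>p. D1 ?ar p - pmult tgt ?es (D1 ?ar) p) \<in> I"
    using ideal_add[OF L1 L1b] by (simp add: algebra_simps)
  have L2: "(\<lambda>p. D1 ?ar p - (pmult tgt (D1 ?ar) ?et p + pmult tgt ?ar (D1 ?et) p)) \<in> I"
    using is_der_leibnizD[OF dm1 arPA etPA] unfolding h2 .
  have L2b: "pmult tgt ?ar (D1 ?et) \<in> I" using hv tV by (intro ideal_mult_left arPA) auto
  have c2: "(\<lambda>p. D1 ?ar p - pmult tgt (D1 ?ar) ?et p) \<in> I"
    using ideal_add[OF L2 L2b] by (simp add: algebra_simps)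
  have c3: "(\<lambda>p. pmult tgt ?es (D1 ?ar) p - pmult tgt ?es (pmult tgt (D1 ?ar) ?et) p) \<in> I"
    by (rule ideal_cong_mult_left[OF esPA c2])
  have c4: "(\<lambda>p. D1 ?ar p - pmult tgt ?es (pmult tgt (D1 ?ar) ?et) p) \<in> I"
    by (rule ideal_cong_trans[OF c1 c3])
  obtain g where g: "Q_comb g" "(\<lambda>p. D1 ?ar p - g p) \<in> I" using Q_comb_span[OF D1ar] by blast
  have c5: "(\<lambda>p. pmult tgt ?es (pmult tgt (D1 ?ar) ?et) p - pmult tgt ?es (pmult tgt g ?et) p) \<in> I"
    by (rule ideal_cong_mult_left[OF esPA ideal_cong_mult_right[OF etPA g(2)]])
  have c6: "(\<lambda>p. D1 ?ar p - pmult tgt ?es (pmult tgt g ?et) p) \<in> I"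
    by (rule ideal_cong_trans[OF c4 c5])
  define f where "f = (\<lambda>p. if fst p = src a \<and> pend tgt p = tgt a then g p else 0)"
  have "pmult tgt ?es (pmult tgt g ?et) = f"
    unfolding f_def pmult_assoc by (rule pmult_vtx_sandwich)
  then have c7: "(\<lambda>p. D1 ?ar p - f p) \<in> I" using c6 by simp
  have "Q_comb (\<lambda>p. (if fst p = src a \<and> pend tgt p = tgt a then 1 else 0) * g p)"
      by (rule Q_comb_mult[OF g(1)])
  moreover have "(\<lambda>p. (if fst p = src a \<and> pend tgt p = tgt a then 1 else 0) * g p) = f"
    by (rule ext) (simp add: f_def)
  ultimately have "Q_comb f" by simp
  moreover have "\<forall>p. f p \<noteq> 0 \<longrightarrow> fst p = src a \<and> pend tgt p = tgt a" by (simp add: f_def)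
  ultimately show ?thesis using c7 by blast
qed

lemma bder_sum_arr:
  assumes b: "b \<in> E" and Fb: "Q_comb (F b)" "\<forall>p. F b p \<noteq> 0 \<longrightarrow> fst p = src b \<and> pend tgt p = tgt b"
  shows "(\<lambda>p. \<Sum>s\<in>B2 E src tgt Q. F (fst s) (snd s) * bder s (delta (src b, [b])) p) = F b"
proof (rule ext)
  fix p :: "('v,'e) qpath"
  have "(\<Sum>s\<in>B2 E src tgt Q. F (fst s) (snd s) * bder s (delta (src b, [b])) p) =
      (\<Sum>s\<in>B2 E src tgt Q. if s = (b, p) then F b p else 0)"
  proof (rule sum.cong)
    fix s assume s: "s \<in> B2 E src tgt Q"
    then have "(fst s, snd s) \<in> B2 E src tgt Q" by simp
    from basic_der_arr[OF this b] show "F (fst s) (snd s) * bder s (delta (src b, [b])) p =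
        (if s = (b, p) then F b p else 0)"
      by (cases s) (auto simp: delta_def)
  qed simp
  also have "\<dots> = (if (b, p) \<in> B2 E src tgt Q then F b p else 0)" using finite_B2 by simp
  also have "\<dots> = F b p"
  proof (cases "F b p = 0")
    case False
    then have "p \<in> Q" "fst p = src b" "pend tgt p = tgt b"
      using Fb unfolding Q_comb_def by blast+
    then have "(b, p) \<in> B2 E src tgt Q" using b by (simp add: B2_def pstart_def)
    then show ?thesis by simp
  qed simp
  finally show "(\<Sum>s\<in>B2 E src tgt Q. F (fst s) (snd s) * bder s (delta (src b, [b])) p) = F b p" .
qed

text \<open>\<open>D1\<close> and \<open>\<Sum> F\<^sub>a(q) D\<^bsub>a,q\<^esub>\<close> are derivations agreeing modulo \<open>I\<close> on
  vertices and arrows.\<close>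

lemma der_vtx_ideal_spanned:
  assumes dm1: "is_der V E src tgt I D1" and hv: "\<forall>v\<in>V. D1 (delta (v, [])) \<in> I"
    and gens: "\<forall>s\<in>B2 E src tgt Q. spanned Sp (bder s)"
  shows "spanned Sp D1"
proof -
  have "\<forall>a\<in>E. \<exists>f. Q_comb f \<and> (\<lambda>p. D1 (delta (src a, [a])) p - f p) \<in> I \<and>
     (\<forall>p. f p \<noteq> 0 \<longrightarrow> fst p = src a \<and> pend tgt p = tgt a)"
    using der_arrow_parallel[OF dm1 hv] by blast
  then obtain F where F: "\<forall>a\<in>E. Q_comb (F a) \<and> (\<lambda>p. D1 (delta (src a, [a])) p - F a p) \<in> I \<and>
     (\<forall>p. F a p \<noteq> 0 \<longrightarrow> fst p = src a \<and> pend tgt p = tgt a)"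
    by (rule bchoice[elim_format]) blast
  define Lf where "Lf = (\<lambda>x p. \<Sum>s\<in>B2 E src tgt Q. F (fst s) (snd s) * bder s x p)"
  have dmLf: "is_der V E src tgt I Lf" unfolding Lf_def
    by (rule is_der_sum[OF finite_B2]) (use is_der_bder in blast)
  define Del where "Del = (\<lambda>x p. 1 * D1 x p + (-1) * Lf x p)"
  have dmDel: "is_der V E src tgt I Del" unfolding Del_def by (rule is_der_lin[OF dm1 dmLf])
  have Lf_v: "Lf (delta (v, [])) = (\<lambda>_. 0)" if "v \<in> V" for v
    unfolding Lf_def using basic_der_vtx[OF that] by simp
  have Lf_a: "Lf (delta (src b, [b])) = F b" if b: "b \<in> E" for b
    unfolding Lf_def using bder_sum_arr[OF b] F b by blast
  have "(\<lambda>p. Lf x p - D1 x p) \<in> I" if x: "x \<in> PA" for x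
  proof -
    have "Del x \<in> I"
    proof (rule is_der_vanishes[OF dmDel ends _ _ x])
      show "\<forall>v\<in>V. Del (delta (v, [])) \<in> I" using hv Lf_v by (simp add: Del_def)
      show "\<forall>a\<in>E. Del (delta (src a, [a])) \<in> I" using F Lf_a by (simp add: Del_def)
    qed
    from ideal_uminus[OF this] show ?thesis by (simp add: Del_def)
  qed
  moreover have "spanned Sp Lf" unfolding Lf_def by (rule spanned_sum[OF finite_B2 gens])
  ultimately show ?thesis using spanned_cong by blast
qed

lemma diff_op_spanned:
  assumes D: "is_diff_op V E src tgt I D" and gens: "\<forall>s\<in>B2 E src tgt Q. spanned Sp (bder s)"
  shows "spanned Sp D"
proof -
  have dmD: "is_der V E src tgt I D" using D by (simp add: is_diff_op_iff_is_der)
  define m0 where "m0 = (\<lambda>p. \<Sum>w\<in>V. pmult tgt (D (delta (w, []))) (delta (w, [])) p)"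
  have m0PA: "m0 \<in> PA" unfolding m0_def
    by (rule pathalg_sum'[OF finV]) (auto intro!: pmult_pathalg is_der_pathalg[OF dmD] vtx_pathalg)
  define D1 where "D1 = (\<lambda>x p. 1 * D x p + (-1) * inner_der tgt m0 x p)"
  have dm1: "is_der V E src tgt I D1"
    unfolding D1_def by (rule is_der_lin[OF dmD is_der_inner_der[OF m0PA]])
  have "\<forall>v\<in>V. D1 (delta (v, [])) \<in> I"
    unfolding D1_def using der_minus_inner_vtx[OF dmD _ m0_def] by blast
  from der_vtx_ideal_spanned[OF dm1 this gens] spanned_inner_der[OF m0PA]
  have "spanned Sp (\<lambda>x p. 1 * D1 x p + 1 * inner_der tgt m0 x p)" by (rule spanned_lin)
  then show ?thesis by (rule spanned_ext) (simp add: D1_def)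
qed

definition incidence :: "'v \<Rightarrow> 'e \<Rightarrow> 'k" where
  "incidence v a = (if src a = v then 1 else 0) - (if tgt a = v then 1 else 0)"

lemma arrow_self_B2: "a \<in> E \<Longrightarrow> (a, (src a, [a])) \<in> B2 E src tgt Q"
  using arrow_in_Q by (auto simp: B2_def pstart_def pend_def)

text \<open>Both sides are derivations, and they agree on vertices and arrows.\<close>

lemma inner_der_vtx_incidence:
  assumes v: "v \<in> V"
  shows "\<forall>x\<in>PA. (\<lambda>p. inner_der tgt (delta (v, [])) x p -
     (\<Sum>a\<in>E. incidence v a * basic_der V E src tgt a (src a, [a]) x p)) \<in> I"
proof
  fix x :: "('v,'e) qpath \<Rightarrow> 'k" assume x: "x \<in> PA"
  let ?W = "\<lambda>x p. \<Sum>a\<in>E. incidence v a * basic_der V E src tgt a (src a, [a]) x p"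
  have dmW: "is_der V E src tgt I ?W"
    by (rule is_der_sum[OF finE]) (use is_der_bder arrow_self_B2 in force)
  define Del where "Del = (\<lambda>x p. 1 * inner_der tgt (delta (v, [])) x p + (-1) * ?W x p)"
  have dmDel: "is_der V E src tgt I Del" unfolding Del_def
    by (rule is_der_lin[OF is_der_inner_der[OF vtx_pathalg[OF v]] dmW])
  have "Del x \<in> I"
  proof (rule is_der_vanishes[OF dmDel ends _ _ x])
    show "\<forall>u\<in>V. Del (delta (u, [])) \<in> I"
    proof
      fix u assume u: "u \<in> V"
      have "Del (delta (u, [])) = (\<lambda>_. 0)"
      proof (rule ext)
        fix p :: "('v,'e) qpath"
        obtain u' zs where p: "p = (u', zs)" by (cases p)
        show "Del (delta (u, [])) p = 0"
          unfolding Del_def p inner_der_def using basic_der_vtx[OF u]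
          by (simp add: pmult_vtx_left) (simp add: delta_def)
      qed
      then show "Del (delta (u, [])) \<in> I" by (simp add: ideal_zero)
    qed
    show "\<forall>b\<in>E. Del (delta (src b, [b])) \<in> I"
    proof
      fix b assume b: "b \<in> E"
      have W: "?W (delta (src b, [b])) p = incidence v b * delta (src b, [b]) p" for p
      proof -
        have "?W (delta (src b, [b])) p
            = (\<Sum>a\<in>E. if a = b then incidence v b * delta (src b, [b]) p else 0)"
          by (rule sum.cong) (auto simp: basic_der_arr[OF arrow_self_B2 b])
        then show ?thesis using b finE by simp
      qed
      have "Del (delta (src b, [b])) = (\<lambda>_. 0)"
      proof (rule ext)
        fix p :: "('v,'e) qpath"
        obtain u' zs where p: "p = (u', zs)" by (cases p)
        show "Del (delta (src b, [b])) p = 0"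
          unfolding Del_def W unfolding p inner_der_def
          by (simp add: pmult_vtx_left pmult_vtx_right) (simp add: delta_def incidence_def)
      qed
      then show "Del (delta (src b, [b])) \<in> I" by (simp add: ideal_zero)
    qed
  qed
  then show "(\<lambda>p. inner_der tgt (delta (v, [])) x p - ?W x p) \<in> I" by (simp add: Del_def)
qed

lemma bder_comb_vtx: "v \<in> V \<Longrightarrow> Sp \<subseteq> B2 E src tgt Q \<Longrightarrow> bder_comb Sp c (delta (v, [])) = (\<lambda>_. 0)"
  unfolding bder_comb_def using basic_der_vtx by simp

lemma bder_comb_arr:
  assumes a: "a \<in> E" and Sp: "Sp \<subseteq> B2 E src tgt Q"
  shows "bder_comb Sp c (delta (src a, [a])) p = (if (a, p) \<in> Sp then c (a, p) else 0)"
proof -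
  have fin: "finite Sp" using Sp finite_B2 by (rule finite_subset)
  have "bder_comb Sp c (delta (src a, [a])) p = (\<Sum>s\<in>Sp. if s = (a, p) then c (a, p) else 0)"
    unfolding bder_comb_def
  proof (rule sum.cong)
    fix s assume s: "s \<in> Sp"
    then have "(fst s, snd s) \<in> B2 E src tgt Q" using Sp by auto
    from basic_der_arr[OF this a] show "c s * bder s (delta (src a, [a])) p
        = (if s = (a, p) then c (a, p) else 0)"
      by (cases s) (auto simp: delta_def)
  qed simp
  then show ?thesis using fin by simp
qed

text \<open>By acyclicity: modulo \<open>I\<close>, \<open>g\<close> is a combination of basis paths from
  each vertex to itself, and the only such basis paths are the vertices.\<close>

lemma inner_der_vtx_ideal_vertex_supported:
  assumes m: "m \<in> PA" and hv: "\<forall>v\<in>V. inner_der tgt m (delta (v, [])) \<in> I"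
  obtains g where "Q_comb g" "(\<lambda>p. m p - g p) \<in> I" "\<forall>p. snd p \<noteq> [] \<longrightarrow> g p = 0"
proof -
  obtain g where g: "Q_comb g" "(\<lambda>p. m p - g p) \<in> I" using Q_comb_span[OF m] by blast
  have gv: "inner_der tgt g (delta (v, [])) \<in> I" if v: "v \<in> V" for v
    using ideal_diff[OF bspec[OF hv v] inner_der_cong[OF g(2) vtx_pathalg[OF v]]] by simp
  have "snd p = []" if nz: "g p \<noteq> 0" for p
  proof -
    have pQ: "p \<in> Q" using g(1) nz by (auto simp: Q_comb_def)
    obtain u zs where p: "p = (u, zs)" by (cases p)
    have "pvalid_aux V E src tgt u zs" using Q_valid[OF pQ] p by (simp add: pvalid_def)
    then have vV: "pend tgt p \<in> V" using p by (simp add: pend_def pvalid_aux_end)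
    have "inner_der tgt g (delta (pend tgt p, [])) p = 0"
      by (rule Q_comb_ideal_zero[OF _ gv[OF vV]]) (unfold inner_der_vtx, rule Q_comb_mult[OF g(1)])
    then have "fst p = pend tgt p" using nz unfolding inner_der_vtx by (auto split: if_splits)
    then have "p = (fst p, [])" by (intro Q_cycle_trivial pQ) (simp add: pstart_def)
    then show ?thesis by (metis snd_conv)
  qed
  then show ?thesis using that g by blast
qed

lemma inj_on_bder: "inj_on bder (B2 E src tgt Q)"
proof (rule inj_onI)
  fix s t assume s: "s \<in> B2 E src tgt Q" and t: "t \<in> B2 E src tgt Q" and eq: "bder s = bder t"
  have sB: "(fst s, snd s) \<in> B2 E src tgt Q" and tB: "(fst t, snd t) \<in> B2 E src tgt Q"
    using s t by auto
  have aE: "fst s \<in> E" using s by (auto simp: B2_def)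
  have "bder s (delta (src (fst s), [fst s])) = delta (snd s)"
    using basic_der_arr[OF sB aE] by simp
  moreover have "bder t (delta (src (fst s), [fst s])) =
      (if fst s = fst t then delta (snd t) else (\<lambda>_. 0))"
    using basic_der_arr[OF tB aE] by simp
  ultimately have e: "(delta (snd s) :: ('v,'e) qpath \<Rightarrow> 'k) =
      (if fst s = fst t then delta (snd t) else (\<lambda>_. 0))"
    using eq by simp
  then have "fst s = fst t" by (metis (mono_tags) delta_def zero_neq_one)
  moreover have "snd s = snd t" using e \<open>fst s = fst t\<close> by (metis delta_def zero_neq_one)
  ultimately show "s = t" by (simp add: prod_eq_iff)
qed

lemma inner_op_diff_bder_comb:
  assumes D: "is_diff_op V E src tgt I D" and Sp: "Sp \<subseteq> B2 E src tgt Q"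
    and m: "m \<in> PA" and cm: "\<forall>x\<in>PA. (\<lambda>p. D x p - bder_comb Sp c x p - inner_der tgt m x p) \<in> I"
  shows "is_inner_op V E src tgt I (\<lambda>x p. D x p - bder_comb Sp c x p)"
proof -
  have dmD: "is_der V E src tgt I D" and extD: "\<forall>x. x \<notin> PA \<longrightarrow> D x = (\<lambda>_. 0)"
    using D by (simp_all add: is_diff_op_iff_is_der)
  have finSp: "finite Sp" using Sp finite_B2 by (rule finite_subset)
  have "is_der V E src tgt I (bder_comb Sp c)" unfolding bder_comb_def
    by (rule is_der_sum[OF finSp]) (use Sp is_der_bder in blast)
  then have dmDL: "is_der V E src tgt I (\<lambda>x p. D x p - bder_comb Sp c x p)"
    using is_der_lin[OF dmD, of _ 1 "-1"] by simp
  show ?thesis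
    unfolding is_inner_op_def is_diff_op_iff_is_der
  proof (intro conjI allI impI bexI ballI)
    fix x :: "('v,'e) qpath \<Rightarrow> 'k" assume "x \<notin> PA"
    then show "(\<lambda>p. D x p - bder_comb Sp c x p) = (\<lambda>_. 0)"
      using extD by (simp add: bder_comb_def basic_der_def)
  next
    fix x :: "('v,'e) qpath \<Rightarrow> 'k" assume "x \<in> PA"
    then show "(\<lambda>p. (D x p - bder_comb Sp c x p) - (pmult tgt m x p - pmult tgt x m p)) \<in> I"
      using cm by (simp add: inner_der_def)
  next
    show "is_der V E src tgt I (\<lambda>x p. D x p - bder_comb Sp c x p)" by (rule dmDL)
  qed (rule m)
qed

lemma H1_dim_bder_basis:
  assumes Sp: "Sp \<subseteq> B2 E src tgt Q"
    and gens: "\<forall>s\<in>B2 E src tgt Q. spanned Sp (bder s)"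
    and indep: "\<And>c m. m \<in> PA \<Longrightarrow> \<forall>x\<in>PA. (\<lambda>p. bder_comb Sp c x p - inner_der tgt m x p) \<in> I
      \<Longrightarrow> \<forall>s\<in>Sp. c s = 0"
  shows "H1_dim V E src tgt I (card Sp)"
proof -
  have injSp: "inj_on bder Sp" using inj_on_bder Sp by (rule inj_on_subset)
  define S where "S = bder ` Sp"
  have lc_eq: "lincomb c S id = bder_comb Sp (\<lambda>s. c (bder s))" for c
    unfolding lincomb_def bder_comb_def S_def
    by (rule ext, rule ext) (simp add: sum.reindex[OF injSp])
  have "quot_dim {D. is_diff_op V E src tgt I D} {D. is_inner_op V E src tgt I D} (card S)"
    unfolding quot_dim_def
  proof (intro exI conjI)
    show "finite S" using finite_subset[OF Sp finite_B2] by (simp add: S_def)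
    show "card S = card S" ..
    show "S \<subseteq> {D. is_diff_op V E src tgt I D}" using Sp basic_der_diff_op by (auto simp: S_def)
    show "\<forall>c. lincomb c S id \<in> {D. is_inner_op V E src tgt I D} \<longrightarrow> (\<forall>D\<in>S. c D = 0)"
    proof (intro allI impI)
      fix c assume "lincomb c S id \<in> {D. is_inner_op V E src tgt I D}"
      then obtain m where "m \<in> PA"
        "\<forall>x\<in>PA. (\<lambda>p. lincomb c S id x p - (pmult tgt m x p - pmult tgt x m p)) \<in> I"
        by (auto simp: is_inner_op_def)
      then have "\<forall>s\<in>Sp. c (bder s) = 0" by (intro indep) (simp_all add: lc_eq inner_der_def)
      then show "\<forall>D\<in>S. c D = 0" by (auto simp: S_def)
    qed
    show "\<forall>D\<in>{D. is_diff_op V E src tgt I D}.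
        \<exists>c. (\<lambda>x p. D x p - lincomb c S id x p) \<in> {D. is_inner_op V E src tgt I D}"
    proof
      fix D assume "D \<in> {D. is_diff_op V E src tgt I D}"
      then have D: "is_diff_op V E src tgt I D" by simp
      obtain c m where m: "m \<in> PA"
        "\<forall>x\<in>PA. (\<lambda>p. D x p - bder_comb Sp c x p - inner_der tgt m x p) \<in> I"
        using diff_op_spanned[OF D gens] by (auto simp: spanned_def)
      have "lincomb (\<lambda>D'. c (the_inv_into Sp bder D')) S id = bder_comb Sp c"
        unfolding lc_eq using the_inv_into_f_f[OF injSp] by (simp add: bder_comb_def)
      with inner_op_diff_bder_comb[OF D Sp m]
      show "\<exists>c. (\<lambda>x p. D x p - lincomb c S id x p) \<in> {D. is_inner_op V E src tgt I D}"
        by (intro exI[of _ "\<lambda>D'. c (the_inv_into Sp bder D')"]) simp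
    qed
  qed
  moreover have "card S = card Sp" unfolding S_def using injSp by (simp add: card_image)
  ultimately show ?thesis by (simp add: H1_dim_def)
qed

definition cotree :: "(nat \<Rightarrow> 'e) \<Rightarrow> ('e \<times> ('v,'e) qpath) set" where
  "cotree bs = B2 E src tgt Q - (\<lambda>a. (a, (src a, [a]))) ` bs ` {1..<card V}"

lemma finite_cotree: "finite (cotree bs)"
  using finite_B2 by (simp add: cotree_def)

context
  fixes vs :: "nat \<Rightarrow> 'v" and bs :: "nat \<Rightarrow> 'e"
  assumes enum: "tree_enum (card V) V E src tgt vs bs"
begin

lemma spanned_tree_incidence:
  assumes v: "v \<in> V"
  shows "spanned (cotree bs) (\<lambda>x p. \<Sum>j\<in>{1..<card V}.
      incidence v (bs j) * basic_der V E src tgt (bs j) (src (bs j), [bs j]) x p)"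
proof -
  let ?T = "bs ` {1..<card V}"
  let ?Ta = "\<lambda>a. basic_der V E src tgt a (src a, [a])"
  have TE: "?T \<subseteq> E" using tree_enumD(3)[OF enum] by auto
  have PE: "spanned (cotree bs) (\<lambda>x p. \<Sum>a\<in>E. incidence v a * ?Ta a x p)"
    by (rule spanned_cong[OF spanned_inner_der[OF vtx_pathalg[OF v]] inner_der_vtx_incidence[OF v]])
  have PEmT: "spanned (cotree bs) (\<lambda>x p. \<Sum>a\<in>E - ?T. incidence v a * ?Ta a x p)"
  proof (rule spanned_sum)
    show "finite (E - ?T)" using finE by simp
    show "\<forall>a\<in>E - ?T. spanned (cotree bs) (?Ta a)"
    proof
      fix a assume a: "a \<in> E - ?T"
      then have "(a, (src a, [a])) \<in> cotree bs" using arrow_self_B2 by (auto simp: cotree_def)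
      from spanned_bder[OF finite_cotree this] show "spanned (cotree bs) (?Ta a)" by simp
    qed
  qed
  have split: "(\<Sum>a\<in>E. f a) - (\<Sum>a\<in>E - ?T. f a) = (\<Sum>j\<in>{1..<card V}. f (bs j))"
    for f :: "'e \<Rightarrow> 'k"
    using sum.subset_diff[OF TE finE, of f] tree_enum_arrows_inj[OF enum] by (simp add: sum.reindex)
  show ?thesis
    using spanned_lin[OF PE PEmT, of 1 "-1"] by (rule spanned_ext) (use split in simp)
qed

lemma incidence_tree_enum_zero:
  assumes "1 \<le> j" "j < i" "i < card V"
  shows "incidence (vs i) (bs j) = 0"
proof -
  note ord = tree_enumD[OF enum]
  have "j \<in> {1..<card V}" using assms by auto
  then obtain j' where j': "j' < j"
    "(src (bs j) = vs j \<and> tgt (bs j) = vs j') \<or> (src (bs j) = vs j' \<and> tgt (bs j) = vs j)"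
    using ord(3) by blast
  have "vs i \<noteq> vs j" "vs i \<noteq> vs j'"
    using inj_onD[OF ord(2), of i j] inj_onD[OF ord(2), of i j'] assms j'(1) by auto
  then show ?thesis using j'(2) by (auto simp: incidence_def)
qed

lemma incidence_tree_enum_nonzero:
  assumes "1 \<le> i" "i < card V"
  shows "incidence (vs i) (bs i) \<noteq> 0"
proof -
  note ord = tree_enumD[OF enum]
  have "i \<in> {1..<card V}" using assms by auto
  then obtain j where j: "j < i"
    "(src (bs i) = vs i \<and> tgt (bs i) = vs j) \<or> (src (bs i) = vs j \<and> tgt (bs i) = vs i)"
    using ord(3) by blast
  have "vs i \<noteq> vs j" using inj_onD[OF ord(2), of i j] assms j(1) by auto
  then show ?thesis using j(2) by (auto simp: incidence_def)
qed

text \<open>The relation of \<open>spanned_tree_incidence\<close> at \<open>vs i\<close> is triangular: it involves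
  \<open>bs i\<close> with a nonzero coefficient and otherwise only tree arrows \<open>bs j\<close> with \<open>j > i\<close>.\<close>

lemma tree_arrow_spanned:
  assumes "i \<in> {1..<card V}"
  shows "spanned (cotree bs) (basic_der V E src tgt (bs i) (src (bs i), [bs i]))"
  using assms
proof (induction "card V - i" arbitrary: i rule: less_induct)
  case less
  let ?Ta = "\<lambda>a. basic_der V E src tgt a (src a, [a])"
  have i: "1 \<le> i" "i < card V" using less.prems by auto
  have viV: "vs i \<in> V" using tree_enumD(1)[OF enum] i by blast
  let ?w = "incidence (vs i) (bs i)"
  have PU: "spanned (cotree bs) (\<lambda>x p. \<Sum>j\<in>{i<..<card V}. incidence (vs i) (bs j) * ?Ta (bs j) x p)"
  proof (rule spanned_sum, simp, intro ballI)
    fix j assume "j \<in> {i<..<card V}"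
    then have "card V - j < card V - i" "j \<in> {1..<card V}" using i by auto
    then show "spanned (cotree bs) (?Ta (bs j))" by (rule less.hyps)
  qed
  have split: "(\<Sum>j\<in>{1..<card V}. f j) = (\<Sum>j\<in>{1..<i}. f j) + f i + (\<Sum>j\<in>{i<..<card V}. f j)"
    for f :: "nat \<Rightarrow> 'k"
  proof -
    have "{1..<card V} = {1..<i} \<union> ({i} \<union> {i<..<card V})" using i by auto
    moreover have "sum f ({1..<i} \<union> {i<..<card V}) = sum f {1..<i} + sum f {i<..<card V}"
      by (rule sum.union_disjoint) auto
    ultimately show ?thesis by (simp add: sum.union_disjoint add.assoc)
  qed
  have low: "(\<Sum>j\<in>{1..<i}. incidence (vs i) (bs j) * ?Ta (bs j) x p) = 0" for x p
    using incidence_tree_enum_zero i by (auto intro: sum.neutral)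
  show ?case
    using spanned_lin[OF spanned_tree_incidence[OF viV] PU, of "1 / ?w" "- 1 / ?w"]
  proof (rule spanned_ext, intro ballI ext)
    fix x p
    show "1 / ?w * (\<Sum>j\<in>{1..<card V}. incidence (vs i) (bs j) * ?Ta (bs j) x p) +
        - 1 / ?w * (\<Sum>j\<in>{i<..<card V}. incidence (vs i) (bs j) * ?Ta (bs j) x p) = ?Ta (bs i) x p"
      unfolding split low using incidence_tree_enum_nonzero[OF i] by (simp add: field_simps)
  qed
qed

lemma tree_arrows_spanned: "\<forall>s\<in>B2 E src tgt Q. spanned (cotree bs) (bder s)"
proof
  fix s assume s: "s \<in> B2 E src tgt Q"
  show "spanned (cotree bs) (bder s)"
  proof (cases "s \<in> cotree bs")
    case True then show ?thesis by (rule spanned_bder[OF finite_cotree])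
  next
    case False
    then obtain i where i: "i \<in> {1..<card V}" "s = (bs i, (src (bs i), [bs i]))"
      using s by (auto simp: cotree_def)
    then show ?thesis using tree_arrow_spanned[OF i(1)] by simp
  qed
qed

lemma bder_comb_inner_zero:
  assumes m: "m \<in> PA" and h: "\<forall>x\<in>PA. (\<lambda>p. bder_comb (cotree bs) c x p - inner_der tgt m x p) \<in> I"
  shows "\<forall>s\<in>cotree bs. c s = 0"
proof -
  have SpB: "cotree bs \<subseteq> B2 E src tgt Q" by (auto simp: cotree_def)
  have "inner_der tgt m (delta (v, [])) \<in> I" if v: "v \<in> V" for v
  proof -
    have "(\<lambda>p. bder_comb (cotree bs) c (delta (v, [])) p - inner_der tgt m (delta (v, [])) p) \<in> I"
      using h vtx_pathalg[OF v] by blast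
    then show ?thesis using bder_comb_vtx[OF v SpB] by (simp add: ideal_uminus_iff)
  qed
  then obtain g where g: "Q_comb g" "(\<lambda>p. m p - g p) \<in> I" and vanish: "\<forall>p. snd p \<noteq> [] \<longrightarrow> g p = 0"
    using inner_der_vtx_ideal_vertex_supported[OF m] by blast
  define lam where "lam v = g (v, [])" for v
  have H0: "(if (a, p) \<in> cotree bs then c (a, p) else 0) =
      (lam (src a) - lam (tgt a)) * delta (src a, [a]) p" if a: "a \<in> E" for a p
  proof -
    let ?A = "\<lambda>p. if (a, p) \<in> cotree bs then c (a, p) else 0"
    let ?H = "\<lambda>p. ?A p - (lam (src a) - lam (tgt a)) * delta (src a, [a]) p"
    have arPA: "delta (src a, [a]) \<in> PA" by (rule arr_pathalg[OF a])
    have "(\<lambda>p. (bder_comb (cotree bs) c (delta (src a, [a])) p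
        - inner_der tgt m (delta (src a, [a])) p) +
        (inner_der tgt m (delta (src a, [a])) p - inner_der tgt g (delta (src a, [a])) p)) \<in> I"
      using ideal_add[OF bspec[OF h arPA] inner_der_cong[OF g(2) arPA]] by simp
    then have HI: "?H \<in> I"
      by (simp add: bder_comb_arr[OF a SpB] inner_der_vertex_supported_arr[OF vanish] lam_def)
    have "{p. ?A p \<noteq> 0} \<subseteq> snd ` cotree bs"
      by (auto simp: image_iff split: if_splits) (metis snd_conv)
    moreover have "snd ` cotree bs \<subseteq> Q" using SpB by (auto simp: B2_def)
    ultimately have "Q_comb ?A"
      unfolding Q_comb_def using finite_cotree by (meson finite_imageI finite_subset subset_trans)
    then have "Q_comb ?H"
      by (rule Q_comb_diff[OF _ Q_comb_mult[OF Q_comb_delta[OF arrow_in_Q[OF a]]]])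
    then show ?thesis using Q_comb_ideal_zero[OF _ HI] by simp
  qed
  have const: "lam v = lam (vs 0)" if "v \<in> V" for v
  proof (rule tree_enum_constant[OF finV enum _ that], intro ballI)
    fix i assume i: "i \<in> {1..<card V}"
    then have "bs i \<in> E" using tree_enumD(3)[OF enum] by blast
    moreover have "(bs i, (src (bs i), [bs i])) \<notin> cotree bs" using i by (auto simp: cotree_def)
    ultimately show "lam (src (bs i)) = lam (tgt (bs i))"
      using H0[of "bs i" "(src (bs i), [bs i])"] by (simp add: delta_def)
  qed
  show ?thesis
  proof
    fix s assume s: "s \<in> cotree bs"
    obtain a q where sq: "s = (a, q)" by (cases s)
    have a: "a \<in> E" using s sq SpB by (auto simp: B2_def)
    have "lam (src a) = lam (tgt a)" using const ends a by simp
    then show "c s = 0" using H0[OF a, of q] s sq by simp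
  qed
qed

lemma H1_dim_cotree: "H1_dim V E src tgt I (card (cotree bs))"
  by (rule H1_dim_bder_basis[OF _ tree_arrows_spanned bder_comb_inner_zero]) (auto simp: cotree_def)

lemma card_cotree: "int (card (cotree bs)) = int (card (B2 E src tgt Q)) + 1 - int (card V)"
proof -
  let ?Tp = "(\<lambda>a. (a, (src a, [a]))) ` bs ` {1..<card V}"
  have TpB: "?Tp \<subseteq> B2 E src tgt Q" using tree_enumD(3)[OF enum] arrow_self_B2 by auto
  have "card ?Tp = card V - 1"
    using tree_enum_arrows_inj[OF enum] by (subst card_image) (auto simp: inj_on_def card_image)
  moreover have "card V \<ge> 1"
    using conn finV by (simp add: quiver_connected_def Suc_leI card_gt_0_iff)
  moreover have "card ?Tp \<le> card (B2 E src tgt Q)" using card_mono[OF finite_B2 TpB] .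
  ultimately show ?thesis
    using card_Diff_subset[OF finite_subset[OF TpB finite_B2] TpB] by (simp add: cotree_def)
qed

end

end

theorem corollary3p5:
  fixes V :: "'v set" and E :: "'e set" and src tgt :: "'e \<Rightarrow> 'v"
    and I :: "(('v,'e) qpath \<Rightarrow> 'k::field) set" and Q :: "('v,'e) qpath set"
  assumes "finite V" and "finite E"
    and "\<forall>a\<in>E. src a \<in> V \<and> tgt a \<in> V"
    and "quiver_connected V E src tgt"
    and "is_ideal V E src tgt I"
    and "I \<subseteq> arrow_ideal_sq V E src tgt"
    and "path_basis_mod V E src tgt I Q"
    and "\<forall>v\<in>V. \<exists>q\<in>Q. (\<lambda>p. vtx v p - delta q p) \<in> I"
    and "\<forall>a\<in>E. \<exists>q\<in>Q. (\<lambda>p. arr src a p - delta q p) \<in> I"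
    and "\<forall>q\<in>Q. pstart q = pend tgt q \<longrightarrow> (\<exists>v\<in>V. (\<lambda>p. delta q p - vtx v p) \<in> I)"
  shows "\<exists>n. H1_dim V E src tgt I n \<and>
           int n = int (card (B2 E src tgt Q)) + 1 - int (card V)"
proof -
  have aq: "acyclic_quotient V E src tgt I Q"
    unfolding acyclic_quotient_def acyclic_quotient_axioms_def path_ideal_def using assms by blast
  obtain vs bs where "tree_enum (card V) V E src tgt vs bs"
    using tree_enum_exists[OF assms(1,4,3)] by blast
  with acyclic_quotient.H1_dim_cotree[OF aq] acyclic_quotient.card_cotree[OF aq]
  show ?thesis by blast
qed

end
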